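(* Let $X$ be a stacked simplicial complex of dimension $d$, fix a codimension one face $c$ with associated $X_m$, $V_m$, and let $m\ge 0$. (1) Let $\mathcal F$ be a partition of the facets of $X$, let $\sim'_V$ be the associated relation on vertices and $\sim_V$ the equivalence relation it generates. If $v\ne w$ are in $V_m$ and $v\sim_V w$, then there is a sequence $v=v_0,v_1,\dots,v_t=w$ with all $v_i\in V_m$ and $v_{i-1}\sim'_V v_i$ for $1\le i\le t$. (2) Let $\mathcal V$ be a partition of the vertices of $X$ into independent sets, let $\sim'_F$ be the associated relation on facets and $\sim_F$ the equivalence relation it generates. If $f\ne g$ are in $X_m$ and $f\sim_F g$, then there is a sequence $f=f_0,f_1,\dots,f_t=g$ with all $f_i\in X_m$ and $f_{i-1}\sim'_F f_i$ for $1\le i\le t$.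
   Context: A simplicial complex $X$ on a finite vertex set $V$ is a family of subsets (faces) of $V$ closed under taking subsets, every element of $V$ lying in some face; facets are inclusion-maximal faces. $X$ is pure of dimension $d$ if every facet has $d+1$ elements; a codimension one face is a face with $d$ elements. $X$ is stacked if it is pure of some dimension $d$ and its facets can be ordered $F_0,\dots,F_k$ such that for each $p\ge1$, $F_p$ contains exactly one vertex $v_p$ not in $F_0\cup\dots\cup F_{p-1}$, and $F_p\setminus\{v_p\}\subseteq F_j$ for some $j<p$. A walk is a sequence of facets $f_1,\dots,f_p$ ($p\ge1$) with each $f_i\cap f_{i+1}$ of exactly $d$ elements; a path is a walk in which the faces $f_i\cap f_{i+1}$, $1\le i<p$, are pairwise distinct; in a stacked complex there is a unique path between any two facets. For faces $h,k$ with $h\cup k$ not contained in any codimension one face, a path between $h$ and $k$, written $h\,|\,f_1,\dots,f_p\,|\,k$, is a path with $h\subseteq f_1$, $k\subseteq f_p$ and, if $p\ge2$, $h\not\subseteq f_1\cap f_2$, $k\not\subseteq f_p\cap f_{p-1}$; in a stacked complex it exists and is unique. A set of vertices is independent if no two of its distinct elements lie in a common facet. Relation $\sim'_V$ (from a facet partition $\mathcal F$): for distinct vertices $v,w$ not lying in a common facet, with unique path $v\,|\,f_1,\dots,f_p\,|\,w$, $v\sim'_V w$ iff $f_1,f_p$ lie in the same part $Q$ of $\mathcal F$ and none of $f_2,\dots,f_{p-1}$ lies in $Q$. Relation $\sim'_F$ (from a vertex partition $\mathcal V$ into independent sets): for distinct facets $f,f'$ with unique path $f=f_1,\dots,f_p=f'$,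 $v$ the element of $f_1\setminus f_2$ and $w$ the element of $f_p\setminus f_{p-1}$, $f\sim'_F f'$ iff $v,w$ lie in the same part $P$ of $\mathcal V$ and none of $f_2,\dots,f_{p-1}$ contains a vertex of $P$. Distance neighbourhoods: the distance from a facet $f$ to $c$ is the minimal $r\ge1$ such that there is a walk $f_1,\dots,f_r$ with $f_1=f$ and $c\subseteq f_r$; $X_m$ is the set of facets at distance $\le m$ from $c$; $V_0$ is the vertex set of $c$ and, for $m\ge1$, $V_m$ is the set of vertices of facets in $X_m$. *)

theory Defs
  imports Main "HOL-Library.Disjoint_Sets"
begin

definition vertices :: "'a set set \<Rightarrow> 'a set" where
  "vertices X = \<Union>X"

definition simplicial_complex :: "'a set set \<Rightarrow> bool" where
  "simplicial_complex X \<longleftrightarrow> finite (\<Union>X) \<and> (\<forall>F\<in>X. \<forall>G. G \<subseteq> F \<longrightarrow> G \<in> X)"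

definition facets :: "'a set set \<Rightarrow> 'a set set" where
  "facets X = {F \<in> X. \<forall>G\<in>X. F \<subseteq> G \<longrightarrow> G = F}"

definition pure_dim :: "'a set set \<Rightarrow> nat \<Rightarrow> bool" where
  "pure_dim X d \<longleftrightarrow> (\<forall>F\<in>facets X. card F = Suc d)"

definition stacked :: "'a set set \<Rightarrow> nat \<Rightarrow> bool" where
  "stacked X d \<longleftrightarrow> simplicial_complex X \<and> pure_dim X d \<and>
     (\<exists>Fs. Fs \<noteq> [] \<and> distinct Fs \<and> set Fs = facets X \<and>
        (\<forall>p. 0 < p \<and> p < length Fs \<longrightarrow>
           (\<exists>v. Fs ! p - \<Union>(set (take p Fs)) = {v} \<and> (\<exists>j<p. Fs ! p - {v} \<subseteq> Fs ! j))))"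

definition codim_one_face :: "'a set set \<Rightarrow> nat \<Rightarrow> 'a set \<Rightarrow> bool" where
  "codim_one_face X d c \<longleftrightarrow> c \<in> X \<and> card c = d"

definition walk :: "'a set set \<Rightarrow> nat \<Rightarrow> 'a set list \<Rightarrow> bool" where
  "walk X d fs \<longleftrightarrow> fs \<noteq> [] \<and> set fs \<subseteq> facets X \<and>
     (\<forall>i. Suc i < length fs \<longrightarrow> card (fs ! i \<inter> fs ! Suc i) = d)"

definition ridges :: "'a set list \<Rightarrow> 'a set list" where
  "ridges fs = map (\<lambda>i. fs ! i \<inter> fs ! Suc i) [0..<length fs - 1]"

definition path :: "'a set set \<Rightarrow> nat \<Rightarrow> 'a set list \<Rightarrow> bool" where
  "path X d fs \<longleftrightarrow> walk X d fs \<and> distinct (ridges fs)"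

definition path_between :: "'a set set \<Rightarrow> nat \<Rightarrow> 'a set \<Rightarrow> 'a set list \<Rightarrow> 'a set \<Rightarrow> bool" where
  "path_between X d h fs k \<longleftrightarrow> path X d fs \<and> h \<subseteq> hd fs \<and> k \<subseteq> last fs \<and>
     (2 \<le> length fs \<longrightarrow> \<not> h \<subseteq> fs ! 0 \<inter> fs ! 1 \<and> \<not> k \<subseteq> last fs \<inter> fs ! (length fs - 2))"

definition in_common_facet :: "'a set set \<Rightarrow> 'a \<Rightarrow> 'a \<Rightarrow> bool" where
  "in_common_facet X v w \<longleftrightarrow> (\<exists>F\<in>facets X. v \<in> F \<and> w \<in> F)"

definition independent :: "'a set set \<Rightarrow> 'a set \<Rightarrow> bool" where
  "independent X S \<longleftrightarrow> (\<forall>v\<in>S. \<forall>w\<in>S. v \<noteq> w \<longrightarrow> \<not> in_common_facet X v w)"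

definition simV' :: "'a set set \<Rightarrow> nat \<Rightarrow> 'a set set set \<Rightarrow> 'a \<Rightarrow> 'a \<Rightarrow> bool" where
  "simV' X d PF v w \<longleftrightarrow> v \<in> vertices X \<and> w \<in> vertices X \<and> v \<noteq> w \<and> \<not> in_common_facet X v w \<and>
     (\<exists>fs. path_between X d {v} fs {w} \<and>
        (\<exists>Q\<in>PF. hd fs \<in> Q \<and> last fs \<in> Q \<and> (\<forall>i. 0 < i \<and> i < length fs - 1 \<longrightarrow> fs ! i \<notin> Q)))"

definition simF' :: "'a set set \<Rightarrow> nat \<Rightarrow> 'a set set \<Rightarrow> 'a set \<Rightarrow> 'a set \<Rightarrow> bool" where
  "simF' X d PV f g \<longleftrightarrow> f \<in> facets X \<and> g \<in> facets X \<and> f \<noteq> g \<and>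
     (\<exists>fs. path X d fs \<and> hd fs = f \<and> last fs = g \<and>
        (\<exists>v w. fs ! 0 - fs ! 1 = {v} \<and> last fs - fs ! (length fs - 2) = {w} \<and>
           (\<exists>P\<in>PV. v \<in> P \<and> w \<in> P \<and> (\<forall>i. 0 < i \<and> i < length fs - 1 \<longrightarrow> fs ! i \<inter> P = {}))))"

definition gen_equiv :: "('b \<Rightarrow> 'b \<Rightarrow> bool) \<Rightarrow> 'b \<Rightarrow> 'b \<Rightarrow> bool" where
  "gen_equiv R = (\<lambda>x y. R x y \<or> R y x)\<^sup>*\<^sup>*"

text \<open>X_m: facets at distance at most m from c (distance = least r \<ge> 1 with a walk of r facets
  starting at f and ending in a facet containing c).\<close>
definition Xm :: "'a set set \<Rightarrow> nat \<Rightarrow> 'a set \<Rightarrow> nat \<Rightarrow> 'a set set" where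
  "Xm X d c m = {f \<in> facets X. \<exists>fs. walk X d fs \<and> length fs \<le> m \<and> hd fs = f \<and> c \<subseteq> last fs}"

definition Vm :: "'a set set \<Rightarrow> nat \<Rightarrow> 'a set \<Rightarrow> nat \<Rightarrow> 'a set" where
  "Vm X d c m = (if m = 0 then c else \<Union>(Xm X d c m))"

definition chain_in :: "('b \<Rightarrow> 'b \<Rightarrow> bool) \<Rightarrow> 'b set \<Rightarrow> 'b \<Rightarrow> 'b \<Rightarrow> bool" where
  "chain_in R A x y \<longleftrightarrow> (\<exists>xs. xs \<noteq> [] \<and> hd xs = x \<and> last xs = y \<and> set xs \<subseteq> A \<and>
      (\<forall>i. Suc i < length xs \<longrightarrow> R (xs ! i) (xs ! Suc i)))"

end

theory Submission
  imports Defs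
begin

text \<open>
  The dual graph of a stacked complex (facets, adjacent when they share a ridge) is a tree in a
  strong sense: every facet added in a stacking order meets the earlier ones in a single ridge,
  so no path of facets is closed, paths between facets are unique, and the facets containing a
  fixed vertex form a connected subtree. Consequently, if a facet path leaves a vertex x at its
  first step, every path ending at the same facet and starting in a facet containing x ends with
  the whole given path.

  Now compare the neighbourhoods X_n of c with X_(n+1). A facet h of X_(n+1) - X_n is attached
  to X_n through a unique ridge, so every path from X_(n+1) to h enters h through that ridge;
  likewise every path from V_(n+1) to a vertex z of V_(n+1) - V_n ends in the facet containing
  z and enters it through that ridge. Hence if x \<sim>' h \<sim>' y (resp. x \<sim>' z \<sim>' y), the two
  witnessing paths splice to a witness of x \<sim>' y. Taking a chain of \<sim>' steps inside a level
  that contains all of X and deleting the new elements level by level yields a chain inside X_m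
  (resp. V_m).
\<close>

lemma ridges_Nil [simp]: "ridges [] = []"
  by (simp add: ridges_def)

lemma ridges_single [simp]: "ridges [a] = []"
  by (simp add: ridges_def)

lemma ridges_Cons2 [simp]: "ridges (a # b # xs) = (a \<inter> b) # ridges (b # xs)"
  unfolding ridges_def by (simp add: upt_conv_Cons map_Suc_upt[symmetric] del: upt_Suc)

lemma length_ridges [simp]: "length (ridges xs) = length xs - 1"
  by (simp add: ridges_def)

lemma nth_ridges: "i < length xs - 1 \<Longrightarrow> ridges xs ! i = xs ! i \<inter> xs ! Suc i"
  by (simp add: ridges_def)

lemma ridges_append:
  "xs \<noteq> [] \<Longrightarrow> ys \<noteq> [] \<Longrightarrow> ridges (xs @ ys) = ridges xs @ [last xs \<inter> hd ys] @ ridges ys"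
proof (induction xs rule: induct_list012)
  case (2 x) then show ?case by (cases ys) auto
next
  case (3 x y zs) then show ?case by auto
qed simp

lemma ridges_rev: "ridges (rev xs) = rev (ridges xs)"
proof (induction xs rule: induct_list012)
  case (3 x y zs)
  have "ridges (rev (x # y # zs)) = ridges (rev (y # zs) @ [x])" by simp
  also have "\<dots> = ridges (rev (y # zs)) @ [y \<inter> x]" by (subst ridges_append) (auto simp: last_rev)
  finally show ?case using 3 by (auto simp: Int_commute)
qed auto

lemma ridges_drop: "ridges (drop k xs) = drop k (ridges xs)"
  by (rule nth_equalityI) (auto simp: nth_ridges add.commute add_Suc_right)

lemma ridges_take: "ridges (take k xs) = take (k - 1) (ridges xs)"
proof (rule nth_equalityI)
  fix i assume "i < length (ridges (take k xs))"
  then have i: "i < min (length xs) k - 1" by simp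
  then have "ridges (take k xs) ! i = take k xs ! i \<inter> take k xs ! Suc i" by (simp add: nth_ridges)
  also have "\<dots> = ridges xs ! i" using i by (simp add: nth_ridges)
  finally show "ridges (take k xs) ! i = take (k - 1) (ridges xs) ! i" using i by simp
qed simp

lemma mem_ridges_subset_neighbours:
  "t \<in> set (ridges xs) \<Longrightarrow> (\<exists>b\<in>set (tl xs). t \<subseteq> b) \<and> (\<exists>a\<in>set (butlast xs). t \<subseteq> a)"
  by (induction xs rule: induct_list012) auto

lemma exists_exit_index:
  assumes "xs \<noteq> []" "P (xs ! 0)" "\<not> P (last xs)"
  shows "\<exists>i. Suc i < length xs \<and> P (xs ! i) \<and> \<not> P (xs ! Suc i)"
  using assms
proof (induction xs)
  case (Cons a xs)
  show ?case
  proof (cases "xs = [] \<or> \<not> P (xs ! 0)")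
    case True
    then show ?thesis using Cons.prems by (auto intro: exI[of _ 0] simp: hd_conv_nth)
  next
    case False
    then obtain i where "Suc i < length xs" "P (xs ! i)" "\<not> P (xs ! Suc i)" using Cons by auto
    then show ?thesis by (intro exI[of _ "Suc i"]) simp
  qed
qed simp

lemma distinct_nth_notin_drop: "distinct xs \<Longrightarrow> k < length xs \<Longrightarrow> xs ! k \<notin> set (drop (Suc k) xs)"
  by (metis Cons_nth_drop_Suc distinct.simps(2) distinct_drop)

lemma last_notin_butlast: "distinct xs \<Longrightarrow> last xs \<notin> set (butlast xs)"
  by (cases xs rule: rev_cases) auto

lemma common_suffix_hd_mem:
  assumes "pre1 @ fs = pre2 @ bs" "fs \<noteq> []" "bs \<noteq> []"
  shows "hd fs \<in> set bs \<or> hd bs \<in> set fs"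
proof -
  obtain us where "pre1 = pre2 @ us \<and> us @ fs = bs \<or> pre1 @ us = pre2 \<and> fs = us @ bs"
    using assms(1) append_eq_append_conv2 by blast
  then show ?thesis using assms(2,3) by (metis Un_iff hd_in_set set_append)
qed

lemma two_le_length_if_hd_ne_last: "xs \<noteq> [] \<Longrightarrow> hd xs \<noteq> last xs \<Longrightarrow> 2 \<le> length xs"
  by (cases xs rule: rev_cases) (auto simp: Suc_le_eq)

lemma rev_nth_1: "2 \<le> length xs \<Longrightarrow> rev xs ! 1 = xs ! (length xs - 2)"
  by (simp add: rev_nth numeral_2_eq_2)

lemma rev_nth_length_minus_2: "2 \<le> length xs \<Longrightarrow> rev xs ! (length xs - 2) = xs ! 1"
  by (simp add: rev_nth numeral_2_eq_2 Suc_diff_Suc)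

lemma nth_Suc_length_minus_2: "2 \<le> length xs \<Longrightarrow> xs ! Suc (length xs - 2) = last xs"
  by (subst last_conv_nth) (auto simp: numeral_2_eq_2 Suc_diff_Suc)

lemma distinct_nth_1_ne_hd:
  assumes "distinct xs" "2 \<le> length xs"
  shows "xs ! 1 \<noteq> hd xs"
proof -
  have ne: "xs \<noteq> []" using assms(2) by auto
  then have "hd xs = xs ! 0" by (rule hd_conv_nth)
  then show ?thesis using nth_eq_iff_index_eq[OF assms(1), of 1 0] assms(2) ne by simp
qed

lemma distinct_nth_length_minus_2_ne_last:
  assumes "distinct xs" "2 \<le> length xs"
  shows "xs ! (length xs - 2) \<noteq> last xs"
proof -
  have "xs \<noteq> []" using assms(2) by auto
  then have "last xs = xs ! (length xs - 1)" by (rule last_conv_nth)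
  then show ?thesis
    using nth_eq_iff_index_eq[OF assms(1), of "length xs - 2" "length xs - 1"] assms(2) by simp
qed

lemma all_inner_nth_iff:
  "(\<forall>i. 0 < i \<and> i < length xs - 1 \<longrightarrow> P (xs ! i)) \<longleftrightarrow> (\<forall>x\<in>set (butlast (tl xs)). P x)"
  (is "?L \<longleftrightarrow> ?R")
proof
  assume L: ?L
  show ?R
  proof
    fix x assume "x \<in> set (butlast (tl xs))"
    then obtain j where j: "j < length xs - 2" "x = xs ! Suc j"
      by (auto simp: in_set_conv_nth nth_butlast nth_tl numeral_2_eq_2)
    then show "P x" using L by simp
  qed
next
  assume R: ?R
  show ?L
  proof (intro allI impI)
    fix i assume i: "0 < i \<and> i < length xs - 1"
    then obtain j where "i = Suc j" using gr0_conv_Suc by blast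
    then have "butlast (tl xs) ! j = xs ! i" "j < length (butlast (tl xs))"
      using i by (auto simp: nth_butlast nth_tl)
    then show "P (xs ! i)" using R by (metis nth_mem)
  qed
qed

lemma inner_rev: "set (butlast (tl (rev xs))) = set (butlast (tl xs))"
  by (metis butlast_rev butlast_tl rev_rev_ident set_rev)

lemma mem_innerD:
  assumes "distinct xs" "x \<in> set (butlast (tl xs))"
  shows "x \<in> set xs \<and> x \<noteq> hd xs \<and> x \<noteq> last xs"
proof -
  obtain a ys where xs: "xs = a # ys" using assms(2) by (cases xs) auto
  have "x \<in> set ys" "x \<in> set (butlast ys)" using assms(2) xs by (auto dest: in_set_butlastD)
  moreover have "last ys \<notin> set (butlast ys)" using assms(1) xs
    by (metis distinct.simps(2) append_butlast_last_id distinct_append disjoint_iff list.set_intros(1) butlast.simps(1) empty_iff list.set(1))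
  ultimately show ?thesis using assms(1) xs by auto
qed

lemma mem_innerI:
  assumes "x \<in> set xs" "x \<noteq> hd xs" "x \<noteq> last xs"
  shows "x \<in> set (butlast (tl xs))"
proof -
  have tl: "x \<in> set (tl xs)" using assms(1,2) by (cases xs) auto
  then have "tl xs = butlast (tl xs) @ [last xs]"
    by (metis append_butlast_last_id empty_iff last_tl list.set(1))
  then show ?thesis using tl assms(3) by (metis rotate1.simps(2) set_ConsD set_rotate1)
qed

section \<open>Shortening chains of a relation\<close>

definition rel_on :: "('b \<Rightarrow> 'b \<Rightarrow> bool) \<Rightarrow> 'b set \<Rightarrow> 'b \<Rightarrow> 'b \<Rightarrow> bool" where
  "rel_on R A a b \<longleftrightarrow> a \<in> A \<and> b \<in> A \<and> R a b"

text \<open>An element h can be cut out of R-chains in A: any two steps through h can be replaced by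
  at most one step.\<close>

definition bypassable :: "('b \<Rightarrow> 'b \<Rightarrow> bool) \<Rightarrow> 'b set \<Rightarrow> 'b \<Rightarrow> bool" where
  "bypassable R A h \<longleftrightarrow> (\<forall>x\<in>A - {h}. \<forall>y\<in>A - {h}. R x h \<longrightarrow> R h y \<longrightarrow> x = y \<or> R x y)"

lemma bypassable_subset: "bypassable R B h \<Longrightarrow> A \<subseteq> B \<Longrightarrow> bypassable R A h"
  unfolding bypassable_def by blast

lemma rtranclp_rel_on_mono: "A \<subseteq> B \<Longrightarrow> (rel_on R A)\<^sup>*\<^sup>* a b \<Longrightarrow> (rel_on R B)\<^sup>*\<^sup>* a b"
  by (rule rtranclp_mono[THEN predicate2D, rotated]) (auto simp: rel_on_def)

lemma rtranclp_rel_on_if_gen_equiv: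
  assumes sym: "\<And>x y. R x y \<Longrightarrow> R y x" and dom: "\<And>x y. R x y \<Longrightarrow> x \<in> A \<and> y \<in> A"
    and "gen_equiv R a b"
  shows "(rel_on R A)\<^sup>*\<^sup>* a b"
proof -
  have "(\<lambda>x y. R x y \<or> R y x) \<le> rel_on R A" using sym dom unfolding rel_on_def by auto
  then show ?thesis using assms(3) unfolding gen_equiv_def using rtranclp_mono by blast
qed

lemma rtranclp_rel_on_remove:
  assumes ab: "(rel_on R A)\<^sup>*\<^sup>* a b" and "a \<noteq> h" "b \<noteq> h" and irrefl: "\<not> R h h"
    and bypass: "bypassable R A h"
  shows "(rel_on R (A - {h}))\<^sup>*\<^sup>* a b"
proof -
  let ?S = "rel_on R (A - {h})"
  \<comment> \<open>a chain reaching h is remembered by its last element before h\<close>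
  have "(b \<noteq> h \<longrightarrow> ?S\<^sup>*\<^sup>* a b) \<and> (b = h \<longrightarrow> (\<exists>x\<in>A - {h}. ?S\<^sup>*\<^sup>* a x \<and> R x h))"
    using ab
  proof (induction rule: rtranclp_induct)
    case base then show ?case using \<open>a \<noteq> h\<close> by simp
  next
    case (step y z)
    have yz: "y \<in> A" "z \<in> A" "R y z" using step.hyps(2) unfolding rel_on_def by auto
    consider "z = h" | "z \<noteq> h" "y = h" | "z \<noteq> h" "y \<noteq> h" by blast
    then show ?case
    proof cases
      case 1
      then have "y \<noteq> h" using irrefl yz(3) by auto
      then show ?thesis using 1 step.IH yz by blast
    next
      case 2
      then obtain x where x: "x \<in> A - {h}" "?S\<^sup>*\<^sup>* a x" "R x h" using step.IH by blast
      then have "x = z \<or> R x z" using bypass yz 2 unfolding bypassable_def by blast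
      then have "?S\<^sup>*\<^sup>* a z"
      proof
        assume "R x z"
        then have "?S x z" using x(1) yz(2) 2 unfolding rel_on_def by simp
        with x(2) show ?thesis by (rule rtranclp.rtrancl_into_rtrancl)
      qed (use x in simp)
      then show ?thesis using 2 by simp
    next
      case 3
      then show ?thesis
        using step.IH yz by (auto simp: rel_on_def intro: rtranclp.rtrancl_into_rtrancl)
    qed
  qed
  then show ?thesis using \<open>b \<noteq> h\<close> by blast
qed

lemma rtranclp_rel_on_Diff:
  assumes "finite H" "(rel_on R A)\<^sup>*\<^sup>* a b" "a \<notin> H" "b \<notin> H" "\<And>h. \<not> R h h"
    and "\<And>h. h \<in> H \<Longrightarrow> bypassable R A h"
  shows "(rel_on R (A - H))\<^sup>*\<^sup>* a b"
  using assms
proof (induction H rule: finite_induct)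
  case (insert h H)
  have "(rel_on R (A - H))\<^sup>*\<^sup>* a b" by (rule insert.IH) (use insert.prems in auto)
  moreover have "bypassable R (A - H) h" by (rule bypassable_subset[OF insert.prems(5)]) auto
  ultimately have "(rel_on R (A - H - {h}))\<^sup>*\<^sup>* a b"
    using insert.prems(2,3,4) by (intro rtranclp_rel_on_remove) auto
  then show ?case by (metis Diff_insert)
qed simp

lemma rtranclp_rel_on_descend:
  assumes mono: "\<And>n. m \<le> n \<Longrightarrow> S n \<subseteq> S (Suc n)"
    and fin: "\<And>n. m \<le> n \<Longrightarrow> finite (S (Suc n) - S n)"
    and bypass: "\<And>n h. m \<le> n \<Longrightarrow> h \<in> S (Suc n) - S n \<Longrightarrow> bypassable R (S (Suc n)) h"
    and irrefl: "\<And>h. \<not> R h h" and ab: "a \<in> S m" "b \<in> S m"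
  shows "(rel_on R (S (m + k)))\<^sup>*\<^sup>* a b \<Longrightarrow> (rel_on R (S m))\<^sup>*\<^sup>* a b"
proof (induction k)
  case (Suc k)
  let ?N = "m + k"
  have "S m \<subseteq> S ?N"
  proof (induction k)
    case (Suc k)
    have "S (m + k) \<subseteq> S (Suc (m + k))" using mono by simp
    then show ?case using Suc by simp
  qed simp
  then have "a \<notin> S (Suc ?N) - S ?N" "b \<notin> S (Suc ?N) - S ?N" using ab by auto
  then have "(rel_on R (S (Suc ?N) - (S (Suc ?N) - S ?N)))\<^sup>*\<^sup>* a b"
    using rtranclp_rel_on_Diff[OF fin] Suc.prems irrefl bypass by simp
  moreover have "S (Suc ?N) - (S (Suc ?N) - S ?N) = S ?N" using mono[of ?N] by auto
  ultimately show ?case using Suc.IH by simp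
qed simp

lemma chain_in_if_rtranclp:
  assumes "a \<in> A" "(rel_on R A)\<^sup>*\<^sup>* a b"
  shows "chain_in R A a b"
  using assms(2)
proof (induction rule: rtranclp_induct)
  case base
  then show ?case unfolding chain_in_def using assms(1) by (intro exI[of _ "[a]"]) simp
next
  case (step y z)
  obtain xs where xs: "xs \<noteq> []" "hd xs = a" "last xs = y" "set xs \<subseteq> A"
    "\<forall>i. Suc i < length xs \<longrightarrow> R (xs ! i) (xs ! Suc i)"
    using step.IH unfolding chain_in_def by blast
  have yz: "z \<in> A" "R y z" using step.hyps(2) unfolding rel_on_def by auto
  have "\<forall>i. Suc i < length (xs @ [z]) \<longrightarrow> R ((xs @ [z]) ! i) ((xs @ [z]) ! Suc i)"
  proof (intro allI impI)
    fix i assume i: "Suc i < length (xs @ [z])"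
    show "R ((xs @ [z]) ! i) ((xs @ [z]) ! Suc i)"
    proof (cases "Suc i < length xs")
      case True then show ?thesis using xs(5) by (simp add: nth_append)
    next
      case False
      then have "i = length xs - 1" using i by simp
      then have "(xs @ [z]) ! i = y" "(xs @ [z]) ! Suc i = z" using xs(1,3)
        by (auto simp: nth_append last_conv_nth)
      then show ?thesis using yz by simp
    qed
  qed
  then show ?case unfolding chain_in_def using xs yz by (intro exI[of _ "xs @ [z]"]) auto
qed

lemma walk_iff_successively:
  "walk X d fs \<longleftrightarrow> fs \<noteq> [] \<and> set fs \<subseteq> facets X \<and> successively (\<lambda>a b. card (a \<inter> b) = d) fs"
  unfolding walk_def successively_conv_nth by auto

locale stacked_complex =
  fixes X :: "'a set set" and d :: nat
  assumes st: "stacked X d"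
begin

abbreviation "F \<equiv> facets X"

lemma simplicial: "simplicial_complex X" using st by (simp add: stacked_def)
lemma finite_vertex_union: "finite (\<Union>X)" using simplicial by (simp add: simplicial_complex_def)
lemma finite_faces: "finite X" using finite_vertex_union by (simp add: finite_UnionD)

lemma facet_card: "f \<in> F \<Longrightarrow> card f = Suc d"
  using st by (simp add: stacked_def pure_dim_def)
lemma finite_facet: "f \<in> F \<Longrightarrow> finite f"
proof -
  assume "f \<in> F" then have "card f = Suc d" by (rule facet_card)
  then show "finite f" by (metis card.infinite nat.distinct(1))
qed
lemma facet_is_face: "f \<in> F \<Longrightarrow> f \<in> X" by (simp add: facets_def)

lemma facet_subset_eq: "f \<in> F \<Longrightarrow> g \<in> F \<Longrightarrow> f \<subseteq> g \<Longrightarrow> f = g"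
  unfolding facets_def by blast

lemma facets_Int_eq_common_ridge:
  assumes f: "f \<in> F" and g: "g \<in> F" and ne: "f \<noteq> g" and r: "r \<subseteq> f" "r \<subseteq> g" "card r = d"
  shows "f \<inter> g = r"
proof -
  have fin: "finite (f \<inter> g)" using finite_facet[OF f] by simp
  have le: "card (f \<inter> g) \<le> d"
  proof (rule ccontr)
    assume "\<not> ?thesis"
    then have "card (f \<inter> g) \<ge> card f" using facet_card[OF f] by simp
    moreover have "card (f \<inter> g) \<le> card f" using card_mono[OF finite_facet[OF f], of "f\<inter>g"] by simp
    ultimately have "card (f \<inter> g) = card f" by linarith
    then have "f \<inter> g = f" using card_subset_eq[OF finite_facet[OF f], of "f \<inter> g"] by simp
    then have "f \<subseteq> g" by auto
    then show False using facet_subset_eq[OF f g] ne by simp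
  qed
  have "r \<subseteq> f \<inter> g" using r by auto
  moreover have "card r \<ge> card (f \<inter> g)" using le r(3) by simp
  moreover have "card r \<le> card (f \<inter> g)" using card_mono[OF fin] calculation(1) by simp
  ultimately show ?thesis using card_subset_eq[OF fin, of r] by simp
qed

lemma card_facet_Int_self: "f \<in> F \<Longrightarrow> card (f \<inter> f) \<noteq> d" using facet_card by simp

lemma adjacent_Diff_singleton: assumes "f \<in> F" "g \<in> F" "card (f \<inter> g) = d" shows "\<exists>v. f - g = {v}"
proof -
  have "card (f - g) = card f - card (f \<inter> g)"
    using card_Diff_subset_Int[of f g] finite_facet[OF assms(1)] by (simp add: Diff_Int2 card_Diff_subset Int_commute)
  then have "card (f - g) = 1" using facet_card[OF assms(1)] assms(3) by simp
  then show ?thesis by (simp add: card_1_singleton_iff)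
qed

lemma adjacent_Diff_eq: assumes "f \<in> F" "g \<in> F" "card (f \<inter> g) = d" "v \<in> f" "v \<notin> g"
  shows "f - g = {v}"
proof -
  obtain u where u: "f - g = {u}" using adjacent_Diff_singleton[OF assms(1-3)] by blast
  then have "v \<in> {u}" using assms(4,5) by blast
  then show ?thesis using u by simp
qed

lemma card_facet_remove: "f \<in> F \<Longrightarrow> v \<in> f \<Longrightarrow> card (f - {v}) = d"
  using facet_card finite_facet by simp

lemma adjacent_Int_eq_remove: assumes "f \<in> F" "g \<in> F" "card (f \<inter> g) = d" "v \<in> f" "v \<notin> g"
  shows "f \<inter> g = f - {v}"
  using adjacent_Diff_eq[OF assms] by (metis Diff_Diff_Int)

lemma face_subset_facet: assumes "s \<in> X" shows "\<exists>f\<in>F. s \<subseteq> f"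
proof -
  let ?S = "{t \<in> X. s \<subseteq> t}"
  have fin: "finite ?S" using finite_faces by simp
  have ne: "?S \<noteq> {}" using assms by auto
  obtain t where t0: "t \<in> ?S" "card t = Max (card ` ?S)"
    using Max_in[of "card ` ?S"] fin ne by (metis (no_types, lifting) finite_imageI image_iff image_is_empty)
  then have t: "t \<in> ?S" "\<forall>u\<in>?S. card u \<le> card t" using fin by auto
  have "t \<in> X \<and> (\<forall>G\<in>X. t \<subseteq> G \<longrightarrow> G = t)"
  proof (intro conjI ballI impI)
    show "t \<in> X" using t by simp
    fix G assume G: "G \<in> X" "t \<subseteq> G"
    then have "G \<in> ?S" using t by auto
    then have "card G \<le> card t" using t by simp
    moreover have "finite G" using G finite_vertex_union by (meson Sup_upper finite_subset)
    ultimately show "G = t" using card_seteq[of G t] G by simp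
  qed
  then have "t \<in> F" by (simp add: facets_def)
  moreover have "s \<subseteq> t" using t(1) by simp
  ultimately show ?thesis by blast
qed

lemma vertex_in_facet: assumes "x \<in> vertices X" shows "\<exists>f\<in>F. x \<in> f"
proof -
  obtain s where "s \<in> X" "x \<in> s" using assms unfolding vertices_def by blast
  then show ?thesis using face_subset_facet[of s] by blast
qed

lemma facet_sub_vertices: "f \<in> F \<Longrightarrow> f \<subseteq> vertices X"
  unfolding vertices_def using facet_is_face by (simp add: Union_upper)


lemma walk_Cons2: "walk X d (a # b # xs) \<longleftrightarrow> a \<in> F \<and> card (a \<inter> b) = d \<and> walk X d (b # xs)"
  unfolding walk_iff_successively by auto

lemma walk_single[simp]: "walk X d [a] \<longleftrightarrow> a \<in> F"
  unfolding walk_iff_successively by auto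

lemma walk_ne: "walk X d xs \<Longrightarrow> xs \<noteq> []" unfolding walk_iff_successively by simp
lemma walk_set: "walk X d xs \<Longrightarrow> set xs \<subseteq> F" unfolding walk_iff_successively by simp
lemma walk_hd: "walk X d xs \<Longrightarrow> hd xs \<in> F" unfolding walk_iff_successively by (auto intro: hd_in_set)
lemma walk_last: "walk X d xs \<Longrightarrow> last xs \<in> F" unfolding walk_iff_successively by (auto intro: last_in_set)
lemma walk_nth: "walk X d xs \<Longrightarrow> i < length xs \<Longrightarrow> xs ! i \<in> F" unfolding walk_iff_successively by (auto intro: nth_mem)
lemma walk_adj: "walk X d xs \<Longrightarrow> Suc i < length xs \<Longrightarrow> card (xs ! i \<inter> xs ! Suc i) = d"
  unfolding walk_def by blast

lemma walk_append:
  "walk X d xs \<Longrightarrow> walk X d ys \<Longrightarrow> card (last xs \<inter> hd ys) = d \<Longrightarrow> walk X d (xs @ ys)"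
  unfolding walk_iff_successively by (auto simp: successively_append_iff)

lemma walk_appendD1: "walk X d (xs @ ys) \<Longrightarrow> xs \<noteq> [] \<Longrightarrow> walk X d xs"
  unfolding walk_iff_successively by (auto simp: successively_append_iff)
lemma walk_appendD2: "walk X d (xs @ ys) \<Longrightarrow> ys \<noteq> [] \<Longrightarrow> walk X d ys"
  unfolding walk_iff_successively by (auto simp: successively_append_iff)

lemma walk_rev: "walk X d (rev xs) \<longleftrightarrow> walk X d xs"
  unfolding walk_iff_successively by (auto simp: Int_commute)

lemma walk_take: "walk X d xs \<Longrightarrow> 0 < k \<Longrightarrow> walk X d (take k xs)"
  by (metis append_take_drop_id walk_appendD1 walk_ne take_eq_Nil neq0_conv)
lemma walk_drop: "walk X d xs \<Longrightarrow> k < length xs \<Longrightarrow> walk X d (drop k xs)"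
  by (metis append_take_drop_id walk_appendD2 drop_eq_Nil not_le)
lemma walk_tl: "walk X d xs \<Longrightarrow> tl xs \<noteq> [] \<Longrightarrow> walk X d (tl xs)"
  by (metis list.collapse walk_ne append_Cons append_Nil walk_appendD2)
lemma walk_butlast: "walk X d xs \<Longrightarrow> butlast xs \<noteq> [] \<Longrightarrow> walk X d (butlast xs)"
  by (metis append_butlast_last_id walk_appendD1 butlast.simps(1))

lemma walk_append_tl:
  assumes "walk X d xs" "walk X d ys" "last xs = hd ys"
  shows "walk X d (xs @ tl ys)"
proof (cases "tl ys = []")
  case True then show ?thesis using assms(1) by simp
next
  case False
  obtain y z zs where ys: "ys = y # z # zs" using False walk_ne[OF assms(2)]
    by (metis list.collapse)
  have "card (y \<inter> z) = d" using assms(2) unfolding ys walk_Cons2 by simp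
  moreover have "walk X d (z # zs)" using assms(2) unfolding ys walk_Cons2 by simp
  ultimately show ?thesis using walk_append[OF assms(1), of "z # zs"] assms(3) ys by simp
qed

lemma walk_join:
  assumes A: "walk X d A" and B: "walk X d B" and c: "last A = hd B \<or> card (last A \<inter> hd B) = d"
  shows "\<exists>C. walk X d C \<and> hd C = hd A \<and> last C = last B \<and> set C \<subseteq> set A \<union> set B"
proof (cases "last A = hd B")
  case True
  have w: "walk X d (A @ tl B)" using walk_append_tl[OF A B True] .
  have h: "hd (A @ tl B) = hd A" using walk_ne[OF A] by simp
  have l: "last (A @ tl B) = last B"
  proof (cases "tl B = []")
    case True
    then have "B = [hd B]" using walk_ne[OF B] by (metis list.collapse)
    then show ?thesis using \<open>last A = hd B\<close> True by (metis append_Nil2 last_ConsL)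
  next
    case False
    then show ?thesis using last_tl[of B] by simp
  qed
  have s: "set (A @ tl B) \<subseteq> set A \<union> set B" using list.set_sel(2)[of B] by (cases B) auto
  show ?thesis using w h l s by blast
next
  case False
  then have "card (last A \<inter> hd B) = d" using c by simp
  then have w: "walk X d (A @ B)" using walk_append[OF A B] by simp
  have h: "hd (A @ B) = hd A" using walk_ne[OF A] by simp
  have l: "last (A @ B) = last B" using walk_ne[OF B] by simp
  have s: "set (A @ B) \<subseteq> set A \<union> set B" by simp
  show ?thesis using w h l s by blast
qed

lemma walk_join_ridge:
  assumes A: "walk X d A" and B: "walk X d B" and r: "r \<subseteq> last A" "r \<subseteq> hd B" "card r = d"
  shows "\<exists>C. walk X d C \<and> hd C = hd A \<and> last C = last B \<and> set C \<subseteq> set A \<union> set B"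
proof -
  have "last A = hd B \<or> card (last A \<inter> hd B) = d"
  proof (cases "last A = hd B")
    case False
    then have "last A \<inter> hd B = r" using facets_Int_eq_common_ridge[OF walk_last[OF A] walk_hd[OF B] _ r] by simp
    then show ?thesis using r(3) by simp
  qed simp
  then show ?thesis using walk_join[OF A B] by blast
qed

lemma path_rev: "path X d (rev xs) \<longleftrightarrow> path X d xs"
  unfolding path_def by (simp add: walk_rev ridges_rev)

lemma path_drop: "path X d xs \<Longrightarrow> k < length xs \<Longrightarrow> path X d (drop k xs)"
  unfolding path_def using walk_drop ridges_drop distinct_drop by metis
lemma path_take: "path X d xs \<Longrightarrow> 0 < k \<Longrightarrow> path X d (take k xs)"
  unfolding path_def using walk_take ridges_take distinct_take by metis
lemma path_appendD1: assumes "path X d (xs @ ys)" "xs \<noteq> []" shows "path X d xs"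
  using path_take[OF assms(1), of "length xs"] assms(2) by simp
lemma path_appendD2: assumes "path X d (xs @ ys)" "ys \<noteq> []" shows "path X d ys"
  using path_drop[OF assms(1), of "length xs"] assms(2) by simp

lemma path_Cons2: "path X d (a # b # xs) \<longleftrightarrow> a \<in> F \<and> card (a \<inter> b) = d \<and> path X d (b # xs) \<and> a \<inter> b \<notin> set (ridges (b # xs))"
  unfolding path_def walk_Cons2 by auto

lemma path_walk: "path X d xs \<Longrightarrow> walk X d xs" by (simp add: path_def)

end

section \<open>Paths in a stacked complex are unique\<close>

context stacked_complex begin

definition stacking_order :: "'a set list \<Rightarrow> bool" where
  "stacking_order Fs \<longleftrightarrow> Fs \<noteq> [] \<and> distinct Fs \<and> set Fs = F \<and>
     (\<forall>p. 0 < p \<and> p < length Fs \<longrightarrow>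
        (\<exists>v. Fs ! p - \<Union>(set (take p Fs)) = {v} \<and> (\<exists>j<p. Fs ! p - {v} \<subseteq> Fs ! j)))"

lemma stacking_order_exists: "\<exists>Fs. stacking_order Fs"
  using st unfolding stacked_def stacking_order_def by blast

lemma stacking_order_nth: "stacking_order Fs \<Longrightarrow> p < length Fs \<Longrightarrow> Fs ! p \<in> F"
  unfolding stacking_order_def by (metis nth_mem)

lemma stacking_order_index: "stacking_order Fs \<Longrightarrow> f \<in> F \<Longrightarrow> \<exists>p<length Fs. Fs ! p = f"
  unfolding stacking_order_def by (metis in_set_conv_nth)

lemma stacking_order_nth_inj:
  "stacking_order Fs \<Longrightarrow> p < length Fs \<Longrightarrow> q < length Fs \<Longrightarrow> Fs ! p = Fs ! q \<Longrightarrow> p = q"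
  unfolding stacking_order_def using nth_eq_iff_index_eq by blast

lemma stacking_order_new_vertex:
  assumes "stacking_order Fs" "0 < p" "p < length Fs"
  obtains v j where "v \<in> Fs ! p" "\<forall>q<p. v \<notin> Fs ! q" "j < p" "Fs ! p \<inter> Fs ! j = Fs ! p - {v}"
proof -
  obtain v j where v: "Fs ! p - \<Union>(set (take p Fs)) = {v}" "j < p" "Fs ! p - {v} \<subseteq> Fs ! j"
    using assms unfolding stacking_order_def by blast
  have new: "v \<notin> Fs ! q" if "q < p" for q
  proof -
    have "Fs ! q \<in> set (take p Fs)" using that assms(3) by (auto simp: in_set_conv_nth)
    then show ?thesis using v(1) by blast
  qed
  have "Fs ! p \<inter> Fs ! j = Fs ! p - {v}" using v(1,3) new[OF v(2)] by blast
  then show thesis using that v new by blast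
qed

text \<open>The facet of S that comes last in a stacking order meets all its neighbours in S in one
  ridge.\<close>

lemma exists_facet_with_one_ridge_in:
  assumes "S \<subseteq> F" "S \<noteq> {}"
  shows "\<exists>g\<in>S. \<exists>\<rho>. \<forall>b\<in>S. card (b \<inter> g) = d \<longrightarrow> b \<inter> g = \<rho>"
proof -
  obtain Fs where Fs: "stacking_order Fs" using stacking_order_exists by blast
  let ?I = "{q. q < length Fs \<and> Fs ! q \<in> S}"
  obtain s where "s \<in> S" using assms(2) by blast
  then obtain q0 where "q0 < length Fs" "Fs ! q0 = s" using stacking_order_index[OF Fs] assms(1) by blast
  then have "?I \<noteq> {}" using \<open>s \<in> S\<close> by blast
  then have pI: "Max ?I \<in> ?I" by (intro Max_in) simp_all
  define p where "p = Max ?I"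
  let ?g = "Fs ! p"
  have gS: "?g \<in> S" and gF: "?g \<in> F" using pI assms(1) unfolding p_def by auto
  have earlier: "\<exists>q<p. Fs ! q = b" if b: "b \<in> S" "card (b \<inter> ?g) = d" for b
  proof -
    obtain q where q: "q < length Fs" "Fs ! q = b" using stacking_order_index[OF Fs] assms(1) b(1) by blast
    then have "q \<le> p" unfolding p_def using b(1) by (intro Max_ge) simp_all
    moreover have "q \<noteq> p"
    proof
      assume "q = p"
      then have "b = ?g" using q by simp
      then show False using b(2) card_facet_Int_self gF by blast
    qed
    ultimately have "q < p" by simp
    then show ?thesis using q by blast
  qed
  show ?thesis
  proof (cases "p = 0")
    case True
    then have "\<forall>b\<in>S. card (b \<inter> ?g) = d \<longrightarrow> b \<inter> ?g = {}" using earlier by blast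
    then show ?thesis using gS by blast
  next
    case False
    then obtain v j where v: "v \<in> ?g" "\<forall>q<p. v \<notin> Fs ! q"
      using stacking_order_new_vertex[OF Fs, of p] pI unfolding p_def by blast
    have "b \<inter> ?g = ?g - {v}" if b: "b \<in> S" "card (b \<inter> ?g) = d" for b
    proof -
      have "v \<notin> b" using earlier[OF b] v(2) by blast
      moreover have "b \<in> F" using b(1) assms(1) by blast
      ultimately have "?g \<inter> b = ?g - {v}"
        using adjacent_Int_eq_remove[OF gF _ _ v(1)] b(2) by (simp add: Int_commute)
      then show ?thesis by (simp add: Int_commute)
    qed
    then show ?thesis using gS by blast
  qed
qed

lemma path_not_closed:
  assumes P: "path X d fs" and len: "2 \<le> length fs" and hl: "hd fs = last fs"
  shows False
proof -
  have W: "walk X d fs" using P path_walk by blast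
  have D: "distinct (ridges fs)" using P by (simp add: path_def)
  obtain g \<rho> where g: "g \<in> set fs" and gr: "\<forall>b\<in>set fs. card (b \<inter> g) = d \<longrightarrow> b \<inter> g = \<rho>"
    using exists_facet_with_one_ridge_in[of "set fs"] walk_set[OF W] walk_ne[OF W] by auto
  have at_g: "ridges fs ! k = \<rho>" if "k < length fs - 1" "fs ! k = g \<or> fs ! Suc k = g" for k
  proof -
    have "card (fs ! k \<inter> fs ! Suc k) = d" using walk_adj[OF W] that(1) by simp
    moreover have "fs ! k \<in> set fs" "fs ! Suc k \<in> set fs" using that(1) by simp_all
    ultimately have "fs ! k \<inter> fs ! Suc k = \<rho>" using that(2) gr by (metis Int_commute)
    then show ?thesis using that(1) by (simp add: nth_ridges)
  qed
  obtain i where i: "i < length fs" "fs ! i = g" using g by (metis in_set_conv_nth)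
  have "\<exists>p q. p < q \<and> q < length fs - 1 \<and> ridges fs ! p = \<rho> \<and> ridges fs ! q = \<rho>"
  proof (cases "0 < i \<and> i < length fs - 1")
    case True
    then show ?thesis using at_g[of "i - 1"] at_g[of i] i by (intro exI[of _ "i - 1"] exI[of _ i]) auto
  next
    case False
    have ne: "fs \<noteq> []" using len by auto
    have "i = 0 \<or> i = length fs - 1" using False i by auto
    then have "g = hd fs"
    proof
      assume "i = length fs - 1"
      then show ?thesis using i(2) hl ne by (simp add: last_conv_nth)
    qed (use i(2) ne in \<open>simp add: hd_conv_nth\<close>)
    then have ends: "fs ! 0 = g" "fs ! Suc (length fs - 2) = g"
      using ne hl nth_Suc_length_minus_2[OF len] by (simp_all add: hd_conv_nth)
    have "length fs \<noteq> 2"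
    proof
      assume "length fs = 2"
      then have "card (g \<inter> g) = d" using walk_adj[OF W, of 0] ends by (simp add: numeral_2_eq_2)
      then show False using card_facet_Int_self g walk_set[OF W] by blast
    qed
    then show ?thesis using at_g[of 0] at_g[of "length fs - 2"] ends len
      by (intro exI[of _ 0] exI[of _ "length fs - 2"]) auto
  qed
  then show False using D by (auto simp: nth_eq_iff_index_eq)
qed

lemma path_hd_ne_last: "path X d fs \<Longrightarrow> 2 \<le> length fs \<Longrightarrow> hd fs \<noteq> last fs"
  using path_not_closed by blast

lemma path_distinct:
  assumes "path X d fs"
  shows "distinct fs"
proof (rule ccontr)
  assume "\<not> distinct fs"
  then obtain xs ys zs y where "fs = xs @ [y] @ ys @ [y] @ zs" using not_distinct_decomp by blast
  then have "fs = xs @ ((y # ys @ [y]) @ zs)" by simp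
  then have "path X d (y # ys @ [y])" using assms path_appendD1 path_appendD2 by blast
  then show False using path_not_closed[of "y # ys @ [y]"] by simp
qed

lemma path_Cons_reduce:
  assumes P: "path X d P" and x: "x \<in> F" "card (x \<inter> hd P) = d"
  shows "\<exists>Q. path X d Q \<and> hd Q = x \<and> last Q = last P \<and> set Q \<subseteq> insert x (set P)"
proof (cases "x \<inter> hd P \<in> set (ridges P)")
  case False
  have "P \<noteq> []" using P path_walk walk_ne by blast
  then have "path X d (x # P)" using path_Cons2[of x "hd P" "tl P"] x False P by simp
  then show ?thesis using \<open>P \<noteq> []\<close> by (intro exI[of _ "x # P"]) auto
next
  case True
  \<comment> \<open>x is adjacent to a later facet of P through the same ridge; cut P there\<close>
  then obtain k where k: "k < length P - 1" "ridges P ! k = x \<inter> hd P"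
    by (metis in_set_conv_nth length_ridges)
  let ?b = "P ! Suc k" and ?D = "drop (Suc k) P"
  have D: "path X d ?D" "hd ?D = ?b" "last ?D = last P" "set ?D \<subseteq> set P" "?D \<noteq> []"
    using path_drop[OF P, of "Suc k"] k by (auto simp: hd_drop_conv_nth set_drop_subset)
  show ?thesis
  proof (cases "x = ?b")
    case True
    then show ?thesis using D by (intro exI[of _ ?D]) auto
  next
    case False
    have bF: "?b \<in> F" using walk_nth[OF path_walk[OF P]] k by simp
    have "x \<inter> hd P = P ! k \<inter> ?b" using k nth_ridges by metis
    then have xb: "x \<inter> ?b = x \<inter> hd P" using facets_Int_eq_common_ridge[OF x(1) bF False _ _ x(2)] by blast
    have "ridges P ! k \<notin> set (drop (Suc k) (ridges P))"
      using distinct_nth_notin_drop[of "ridges P" k] P k by (simp add: path_def)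
    then have "x \<inter> ?b \<notin> set (ridges ?D)" using xb k(2) by (simp add: ridges_drop)
    then have "path X d (x # ?D)"
      using path_Cons2[of x ?b "tl ?D"] D xb x by (metis list.collapse)
    then show ?thesis using D by (intro exI[of _ "x # ?D"]) auto
  qed
qed

lemma walk_reduce_to_path:
  "walk X d W \<Longrightarrow> \<exists>P. path X d P \<and> hd P = hd W \<and> last P = last W \<and> set P \<subseteq> set W"
proof (induction W)
  case (Cons x W)
  show ?case
  proof (cases "W = []")
    case True
    then show ?thesis using Cons.prems by (intro exI[of _ "[x]"]) (simp add: path_def)
  next
    case False
    then have W: "x \<in> F" "card (x \<inter> hd W) = d" "walk X d W"
      using Cons.prems walk_Cons2[of x "hd W" "tl W"] by simp_all
    then obtain P where P: "path X d P" "hd P = hd W" "last P = last W" "set P \<subseteq> set W"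
      using Cons.IH by blast
    obtain Q where "path X d Q" "hd Q = x" "last Q = last P" "set Q \<subseteq> insert x (set P)"
      using path_Cons_reduce[OF P(1) W(1)] W(2) P(2) by auto
    then show ?thesis using P False by (intro exI[of _ Q]) auto
  qed
qed (use walk_ne in blast)

end

context stacked_complex begin

lemma walk_ConsI: "walk X d W \<Longrightarrow> a \<in> F \<Longrightarrow> card (a \<inter> hd W) = d \<Longrightarrow> walk X d (a # W)"
  using walk_append[of "[a]" W] by simp

lemma path_between_ridges_in_walk:
  assumes W: "walk X d W" "\<rho> \<subseteq> hd W" "r \<subseteq> last W"
  obtains P where "path X d P" "set P \<subseteq> set W" "\<rho> \<subseteq> hd P" "r \<subseteq> last P"
    "\<forall>z\<in>set (tl P). \<not> \<rho> \<subseteq> z" "\<forall>z\<in>set (butlast P). \<not> r \<subseteq> z"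
proof -
  obtain P where P: "path X d P" "hd P = hd W" "last P = last W" "set P \<subseteq> set W"
    using walk_reduce_to_path[OF W(1)] by blast
  have "P \<noteq> []" using P(1) path_walk walk_ne by blast
  then have "hd P \<in> set P" by (rule hd_in_set)
  then have ex1: "\<exists>z\<in>set P. \<rho> \<subseteq> z" using P(2) W(2) by auto
  obtain ys a zs where s1: "P = ys @ a # zs" "\<rho> \<subseteq> a" "\<forall>z\<in>set zs. \<not> \<rho> \<subseteq> z"
    using split_list_last_prop[OF ex1] by blast
  have "last (a # zs) = last W" using s1(1) P(3) by simp
  moreover have "last (a # zs) \<in> set (a # zs)" by (rule last_in_set) simp
  ultimately have ex2: "\<exists>z\<in>set (a # zs). r \<subseteq> z" using W(3) by auto
  obtain ys' b zs' where s2: "a # zs = ys' @ b # zs'" "r \<subseteq> b" "\<forall>y\<in>set ys'. \<not> r \<subseteq> y"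
    using split_list_first_prop[OF ex2] by blast
  let ?P = "ys' @ [b]"
  have "path X d (a # zs)" using path_appendD2[of ys "a # zs"] P(1) s1(1) by simp
  then have "path X d ?P" using path_appendD1[of ?P zs'] s2(1) by simp
  moreover have "hd ?P = a" using s2(1) by (cases ys') simp_all
  moreover have "set (tl ?P) \<subseteq> set zs"
  proof (cases ys')
    case (Cons u us)
    then show ?thesis using s2(1) by auto
  qed simp
  moreover have "set ?P \<subseteq> set W"
  proof -
    have "set ?P \<subseteq> set (a # zs)" using s2(1) by auto
    also have "\<dots> \<subseteq> set P" using s1(1) by auto
    finally show ?thesis using P(4) by blast
  qed
  moreover have "\<forall>z\<in>set (tl ?P). \<not> \<rho> \<subseteq> z" using calculation(3) s1(3) by blast
  moreover have "butlast ?P = ys'" by simp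
  ultimately show thesis using that[of ?P] s1(2) s2(2,3) by simp
qed

text \<open>The dual graph is a tree: two distinct ridges of a facet h are not joined by a walk
  avoiding h.\<close>

lemma ridges_of_facet_not_connected:
  assumes h: "h \<in> F" and rh: "\<rho> \<subseteq> h" "r \<subseteq> h" "card \<rho> = d" "card r = d" "\<rho> \<noteq> r"
    and W: "walk X d W" "h \<notin> set W" "\<rho> \<subseteq> hd W" "r \<subseteq> last W"
  shows False
proof -
  obtain P where P: "path X d P" "set P \<subseteq> set W" "\<rho> \<subseteq> hd P" "r \<subseteq> last P"
    "\<forall>z\<in>set (tl P). \<not> \<rho> \<subseteq> z" "\<forall>z\<in>set (butlast P). \<not> r \<subseteq> z"
    using path_between_ridges_in_walk[OF W(1,3,4)] by blast
  have Pne: "P \<noteq> []" using P(1) path_walk walk_ne by blast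
  have "hd P \<in> F" "last P \<in> F" using P(1) path_walk walk_hd walk_last by blast+
  moreover have "h \<noteq> hd P" "h \<noteq> last P" using P(2) W(2) Pne by (meson hd_in_set last_in_set subsetD)+
  ultimately have ha: "h \<inter> hd P = \<rho>" and hb: "last P \<inter> h = r"
    using facets_Int_eq_common_ridge h rh P(3,4) by blast+
  define C where "C = [h] @ P @ [h]"
  have "walk X d (P @ [h])" using walk_append[OF path_walk[OF P(1)], of "[h]"] h hb rh(4) by simp
  then have "walk X d C" unfolding C_def using walk_append[of "[h]" "P @ [h]"] h ha rh(3) Pne by simp
  moreover have "ridges C = [\<rho>] @ ridges P @ [r]"
    unfolding C_def using ridges_append[of "[h]" "P @ [h]"] ridges_append[of P "[h]"] Pne ha hb by simp
  moreover have "\<rho> \<notin> set (ridges P)" "r \<notin> set (ridges P)"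
    using mem_ridges_subset_neighbours P(5,6) by blast+
  ultimately have "path X d C" using P(1) rh(5) by (simp add: path_def)
  moreover have "2 \<le> length C" "hd C = last C" unfolding C_def by simp_all
  ultimately show False using path_not_closed by blast
qed

lemma star_walk_to_first:
  assumes Fs: "stacking_order Fs" and q0: "q0 < length Fs" "s \<subseteq> Fs ! q0" "\<forall>q<q0. \<not> s \<subseteq> Fs ! q"
  shows "p < length Fs \<Longrightarrow> s \<subseteq> Fs ! p \<Longrightarrow>
    \<exists>W. walk X d W \<and> hd W = Fs ! p \<and> last W = Fs ! q0 \<and> (\<forall>f\<in>set W. s \<subseteq> f)"
proof (induction p rule: less_induct)
  case (less p)
  show ?case
  proof (cases "p = q0")
    case True
    then show ?thesis using stacking_order_nth[OF Fs less.prems(1)] less.prems(2)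
      by (intro exI[of _ "[Fs ! p]"]) simp
  next
    case False
    then have "q0 < p" using q0(3) less.prems(2) by (meson linorder_neqE_nat)
    then obtain v j where v: "v \<in> Fs ! p" "\<forall>q<p. v \<notin> Fs ! q" "j < p" "Fs ! p \<inter> Fs ! j = Fs ! p - {v}"
      using stacking_order_new_vertex[OF Fs _ less.prems(1)] by (metis gr_zeroI not_less0)
    have "v \<notin> s" using v(2) \<open>q0 < p\<close> q0(2) by blast
    then have sj: "s \<subseteq> Fs ! j" using v(4) less.prems(2) by blast
    have jl: "j < length Fs" using v(3) less.prems(1) by simp
    obtain W where W: "walk X d W" "hd W = Fs ! j" "last W = Fs ! q0" "\<forall>f\<in>set W. s \<subseteq> f"
      using less.IH[OF v(3) jl sj] by blast
    have pF: "Fs ! p \<in> F" using stacking_order_nth[OF Fs less.prems(1)] .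
    have "card (Fs ! p \<inter> Fs ! j) = d" using v(4) card_facet_remove[OF pF v(1)] by simp
    then have "walk X d (Fs ! p # W)" using walk_ConsI[OF W(1) pF] W(2) by simp
    then show ?thesis using W walk_ne[OF W(1)] less.prems(2) by (intro exI[of _ "Fs ! p # W"]) simp
  qed
qed

lemma star_connected:
  assumes a: "a \<in> F" "s \<subseteq> a" and b: "b \<in> F" "s \<subseteq> b"
  shows "\<exists>W. walk X d W \<and> hd W = a \<and> last W = b \<and> (\<forall>f\<in>set W. s \<subseteq> f)"
proof -
  obtain Fs where Fs: "stacking_order Fs" using stacking_order_exists by blast
  obtain pa where pa: "pa < length Fs" "Fs ! pa = a" using stacking_order_index[OF Fs a(1)] by blast
  obtain pb where pb: "pb < length Fs" "Fs ! pb = b" using stacking_order_index[OF Fs b(1)] by blast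
  define q0 where "q0 = (LEAST q. q < length Fs \<and> s \<subseteq> Fs ! q)"
  have q0: "q0 < length Fs" "s \<subseteq> Fs ! q0"
    unfolding q0_def using LeastI[of "\<lambda>q. q < length Fs \<and> s \<subseteq> Fs ! q" pa] pa a(2) by blast+
  have "\<forall>q<q0. \<not> s \<subseteq> Fs ! q" using q0(1) not_less_Least unfolding q0_def by fastforce
  note to_first = star_walk_to_first[OF Fs q0 this]
  obtain Wa where Wa: "walk X d Wa" "hd Wa = a" "last Wa = Fs ! q0" "\<forall>f\<in>set Wa. s \<subseteq> f"
    using to_first[of pa] pa a(2) by blast
  obtain Wb where Wb: "walk X d Wb" "hd Wb = b" "last Wb = Fs ! q0" "\<forall>f\<in>set Wb. s \<subseteq> f"
    using to_first[of pb] pb b(2) by blast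
  have "walk X d (rev Wb)" "hd (rev Wb) = Fs ! q0" "last (rev Wb) = b"
    using Wb walk_ne[OF Wb(1)] by (simp_all add: walk_rev hd_rev last_rev)
  then obtain C where C: "walk X d C" "hd C = a" "last C = b" "set C \<subseteq> set Wa \<union> set (rev Wb)"
    using walk_join[OF Wa(1)] Wa(2,3) by metis
  then show ?thesis using Wa(4) Wb(4) by (intro exI[of _ C]) auto
qed

lemma vertex_star_connected:
  "a \<in> F \<Longrightarrow> x \<in> a \<Longrightarrow> b \<in> F \<Longrightarrow> x \<in> b \<Longrightarrow> \<exists>W. walk X d W \<and> hd W = a \<and> last W = b \<and> (\<forall>f\<in>set W. x \<in> f)"
  using star_connected[of a "{x}" b] by simp

lemma facets_connected: "a \<in> F \<Longrightarrow> b \<in> F \<Longrightarrow> \<exists>W. walk X d W \<and> hd W = a \<and> last W = b"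
  using star_connected[of a "{}" b] by blast

lemma walk_leave_hd:
  assumes W: "walk X d W" "hd W = a" "last W \<noteq> a"
  shows "\<exists>W'. walk X d W' \<and> a \<notin> set W' \<and> card (a \<inter> hd W') = d \<and> last W' = last W \<and> set W' \<subseteq> set W"
proof -
  have "a \<in> set W" using W walk_ne hd_in_set by metis
  then obtain ys zs where s: "W = ys @ a # zs" "a \<notin> set zs" using split_list_last by metis
  have zne: "zs \<noteq> []" using s W(3) by auto
  have "walk X d (a # hd zs # tl zs)" using walk_appendD2[of ys "a # zs"] W(1) s(1) zne by simp
  then have "card (a \<inter> hd zs) = d" "walk X d zs" unfolding walk_Cons2 using zne by auto
  then show ?thesis using s zne by (intro exI[of _ zs]) auto
qed

end

context stacked_complex begin

lemma path_hd_notin_tl: "path X d P \<Longrightarrow> hd P \<notin> set (tl P)"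
  using path_distinct by (metis distinct.simps(2) list.collapse list.sel(2) list.set(1) empty_iff)

text \<open>A facet a separates its neighbour b across a ridge missing x from the rest of the star of x.\<close>

lemma walk_into_star_passes:
  assumes a: "a \<in> F" "x \<in> a" and b: "card (a \<inter> b) = d" "x \<notin> b"
    and W: "walk X d W" "hd W = b" "x \<in> last W" "last W \<noteq> a"
  shows "a \<in> set W"
proof (rule ccontr)
  assume aW: "a \<notin> set W"
  obtain S where S: "walk X d S" "hd S = a" "last S = last W" "\<forall>f\<in>set S. x \<in> f"
    using vertex_star_connected[OF a walk_last[OF W(1)] W(3)] by blast
  obtain S' where S': "walk X d S'" "a \<notin> set S'" "card (a \<inter> hd S') = d" "last S' = last W"
      "set S' \<subseteq> set S"
    using walk_leave_hd[OF S(1,2)] S(3) W(4) by auto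
  have "x \<in> hd S'" using S'(5) S(4) walk_ne[OF S'(1)] hd_in_set by blast
  then have ridges_ne: "a \<inter> b \<noteq> a \<inter> hd S'" using b(2) a(2) by blast
  have "walk X d (rev S')" "hd (rev S') = last W" "last (rev S') = hd S'"
    using S'(1,4) walk_ne[OF S'(1)] by (simp_all add: walk_rev hd_rev last_rev)
  then obtain Y where Y: "walk X d Y" "hd Y = b" "last Y = hd S'" "set Y \<subseteq> set W \<union> set (rev S')"
    using walk_join[OF W(1)] W(2) by metis
  have "a \<notin> set Y" using Y(4) aW S'(2) by auto
  then show False
    using ridges_of_facet_not_connected[OF a(1) _ _ b(1) S'(3) ridges_ne Y(1)] Y(2,3) by blast
qed

lemma path_vertex_not_regained:
  assumes P: "path X d P" and len: "2 \<le> length P" and x: "x \<in> hd P" "x \<notin> P ! 1"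
    and k: "1 \<le> k" "k < length P"
  shows "x \<notin> P ! k"
proof
  assume xk: "x \<in> P ! k"
  have W: "walk X d P" using P path_walk by blast
  obtain g Q where PgQ: "P = g # Q" using len by (cases P) auto
  then have "Q \<noteq> []" using len by auto
  let ?A = "take k Q"
  have A: "walk X d ?A" "hd ?A = P ! 1" "last ?A = P ! k"
    using walk_take[OF walk_tl[OF W]] k \<open>Q \<noteq> []\<close> PgQ by (auto simp: hd_conv_nth last_conv_nth)
  have g: "g \<in> F" "x \<in> g" "card (g \<inter> P ! 1) = d"
    using walk_hd[OF W] x(1) walk_adj[OF W, of 0] \<open>Q \<noteq> []\<close> PgQ by simp_all
  have "g \<notin> set ?A" using path_hd_notin_tl[OF P] PgQ by (auto dest: in_set_takeD)
  moreover have "last ?A \<in> set ?A" using walk_ne[OF A(1)] by simp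
  ultimately show False
    using walk_into_star_passes[OF g x(2) A(1,2)] A(3) xk by auto
qed

lemma path_second_ridge_unique:
  assumes P: "path X d (a # b # R)" and P': "path X d (a # b' # R')"
    and l: "last (b # R) = last (b' # R')" and "b \<noteq> b'"
  shows "a \<inter> b = a \<inter> b'"
proof (rule ccontr)
  assume ne: "a \<inter> b \<noteq> a \<inter> b'"
  have "walk X d (b # R)" using P path_Cons2 path_walk by blast
  moreover have "walk X d (rev (b' # R'))" using P' path_Cons2 path_walk walk_rev by blast
  moreover have "hd (rev (b' # R')) = last (b # R)" using l by (simp add: hd_rev)
  ultimately obtain Y where Y: "walk X d Y" "hd Y = b" "last Y = b'" "set Y \<subseteq> set (b # R) \<union> set (b' # R')"
    using walk_join[of "b # R" "rev (b' # R')"] by (auto simp: last_rev)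
  have "a \<notin> set Y" using Y(4) path_hd_notin_tl[OF P] path_hd_notin_tl[OF P'] by auto
  moreover have "a \<in> F" "card (a \<inter> b) = d" "card (a \<inter> b') = d" using P P' path_Cons2 by blast+
  ultimately show False using ridges_of_facet_not_connected[OF _ _ _ _ _ ne Y(1)] Y(2,3) by blast
qed

lemma path_unique:
  "path X d P1 \<Longrightarrow> path X d P2 \<Longrightarrow> hd P1 = hd P2 \<Longrightarrow> last P1 = last P2 \<Longrightarrow> P1 = P2"
proof (induction P1 arbitrary: P2 rule: induct_list012)
  case 1 then show ?case using path_walk walk_ne by blast
next
  case (2 a)
  then have "P2 \<noteq> []" "hd P2 = last P2" using path_walk walk_ne by auto
  moreover have "\<not> 2 \<le> length P2" using path_not_closed[OF "2.prems"(2)] calculation(2) by blast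
  ultimately have "P2 = [hd P2]" by (cases P2) (auto simp: Suc_le_eq)
  then show ?case using "2.prems"(3) by simp
next
  case (3 a b R)
  have "a \<noteq> last (a # b # R)" using path_hd_ne_last[OF "3.prems"(1)] by simp
  then obtain b' R' where P2: "P2 = a # b' # R'"
    using "3.prems"(2-4) path_walk walk_ne by (cases P2 rule: remdups_adj.cases) auto
  have p1: "path X d (b # R)" and p2: "path X d (b' # R')"
    using "3.prems"(1,2) P2 path_Cons2 by blast+
  have l12: "last (b # R) = last (b' # R')" using "3.prems"(4) P2 by simp
  show ?case
  proof (cases "b = b'")
    case True
    then show ?thesis using "3.IH"(2)[OF p1 p2] l12 P2 by simp
  next
    case False
    \<comment> \<open>then both paths leave a through the same ridge, which reappears as b \<inter> b'\<close>
    have ab: "a \<inter> b = a \<inter> b'"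
      using path_second_ridge_unique "3.prems"(1,2) P2 l12 False by blast
    have bF: "b \<in> F" "b' \<in> F" using p1 p2 path_walk walk_hd by fastforce+
    have c1: "card (a \<inter> b) = d" using "3.prems"(1) path_Cons2 by blast
    have bb': "b \<inter> b' = a \<inter> b"
      using facets_Int_eq_common_ridge[OF bF False, of "a \<inter> b"] ab c1 by auto
    have "a \<inter> b' \<notin> set (ridges (b' # R'))" using "3.prems"(2) P2 path_Cons2 by blast
    then have "path X d (b # b' # R')" using path_Cons2[of b b' R'] bF bb' c1 p2 ab by simp
    then have "R = b' # R'" using "3.IH"(2)[OF p1] l12 by fastforce
    then show ?thesis using "3.prems"(1) bb' by (simp add: path_def)
  qed
qed

lemma path_is_suffix:
  assumes fs: "path X d fs" "2 \<le> length fs" "x \<in> hd fs" "x \<notin> fs ! 1"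
    and A: "path X d A" "x \<in> hd A" "last A = last fs"
  shows "\<exists>pre. A = pre @ fs"
proof -
  have Wf: "walk X d fs" and WA: "walk X d A" using fs(1) A(1) path_walk by blast+
  have fsne: "fs \<noteq> []" using fs(2) by auto
  have notx: "x \<notin> fs ! k" if "1 \<le> k" "k < length fs" for k
    using path_vertex_not_regained[OF fs] that by blast
  have "hd fs \<in> set A"
  proof (rule ccontr)
    assume nin: "hd fs \<notin> set A"
    have "x \<notin> last A" using notx[of "length fs - 1"] fs(2) fsne A(3) by (simp add: last_conv_nth)
    then obtain i where i: "Suc i < length A" "x \<in> A ! i" "x \<notin> A ! Suc i"
      using exists_exit_index[of A "\<lambda>f. x \<in> f"] walk_ne[OF WA] A(2) by (auto simp: hd_conv_nth)
    let ?a = "A ! i" and ?b = "A ! Suc i"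
    \<comment> \<open>A coincides with the path through the star of x followed by fs\<close>
    obtain S where S: "walk X d S" "hd S = hd A" "last S = hd fs" "\<forall>f\<in>set S. x \<in> f"
      using vertex_star_connected[OF walk_hd[OF WA] A(2) walk_hd[OF Wf] fs(3)] by blast
    obtain C where C: "walk X d C" "hd C = hd A" "last C = last fs" "set C \<subseteq> set S \<union> set fs"
      using walk_join[OF S(1) Wf] S(2,3) by metis
    obtain B where B: "path X d B" "hd B = hd C" "last B = last C" "set B \<subseteq> set C"
      using walk_reduce_to_path[OF C(1)] by blast
    have "A = B" using path_unique[OF A(1) B(1)] B(2,3) C(2,3) A(3) by simp
    then have "?b \<in> set fs" using i(1,3) B(4) C(4) S(4) by (metis UnE nth_mem subsetD)
    then obtain k where k: "k < length fs" "fs ! k = ?b" by (metis in_set_conv_nth)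
    have "k \<noteq> 0" using k nin i(1) fsne by (metis hd_conv_nth nth_mem)
    let ?T = "rev (take (Suc k) fs)"
    have "walk X d ?T" unfolding walk_rev using walk_take[OF Wf] by simp
    moreover have "hd ?T = ?b" using k by (simp add: hd_rev take_Suc_conv_app_nth)
    moreover have "last ?T = hd fs" using fsne by (simp add: last_rev)
    ultimately have T: "walk X d ?T" "hd ?T = ?b" "last ?T = hd fs" by blast+
    have "?a \<notin> set ?T"
    proof
      assume "?a \<in> set ?T"
      then obtain j where j: "j < Suc k" "fs ! j = ?a" using k(1) by (auto simp: in_set_conv_nth)
      then have "j = 0" using notx[of j] i(2) k(1) by fastforce
      then show False using j nin i(1) fsne by (metis Suc_lessD hd_conv_nth nth_mem)
    qed
    moreover have "?a \<in> F" "card (?a \<inter> ?b) = d" using walk_nth[OF WA] walk_adj[OF WA i(1)] i(1) by simp_all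
    moreover have "hd fs \<noteq> ?a" using nin i(1) by (metis Suc_lessD nth_mem)
    ultimately show False using walk_into_star_passes[OF _ i(2) _ i(3) T(1,2)] T(3) fs(3) by blast
  qed
  then obtain pre suf where s: "A = pre @ hd fs # suf" by (metis split_list)
  have "path X d (hd fs # suf)" using path_appendD2[of pre "hd fs # suf"] A(1) s by simp
  then have "hd fs # suf = fs" using path_unique fs(1) s A(3) by simp
  then show ?thesis using s by metis
qed

lemma path_length_two_le:
  "path X d fs \<Longrightarrow> hd fs \<noteq> last fs \<Longrightarrow> 2 \<le> length fs"
  using two_le_length_if_hd_ne_last path_walk walk_ne by blast

lemma path_butlast_facts:
  assumes "path X d fs" "2 \<le> length fs"
  shows "walk X d (butlast fs)" "hd (butlast fs) = hd fs" "last (butlast fs) = fs ! (length fs - 2)"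
    "last fs \<notin> set (butlast fs)"
proof -
  have bne: "butlast fs \<noteq> []" using assms(2) by (cases fs) auto
  show "walk X d (butlast fs)" using walk_butlast[OF path_walk[OF assms(1)] bne] .
  show "hd (butlast fs) = hd fs" using assms(2) by (cases fs) auto
  show "last (butlast fs) = fs ! (length fs - 2)" using assms(2) bne by (simp add: last_conv_nth nth_butlast numeral_2_eq_2)
  show "last fs \<notin> set (butlast fs)" using last_notin_butlast path_distinct[OF assms(1)] by blast
qed

lemma path_adjacent_last:
  assumes "path X d fs" "2 \<le> length fs"
  shows "card (fs ! (length fs - 2) \<inter> last fs) = d"
  using walk_adj[OF path_walk[OF assms(1)], of "length fs - 2"] assms(2) nth_Suc_length_minus_2[OF assms(2)] by simp

lemma path_adjacent_first:
  assumes "path X d fs" "2 \<le> length fs"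
  shows "card (hd fs \<inter> fs ! 1) = d"
proof -
  have "fs \<noteq> []" using assms(2) by auto
  then show ?thesis using walk_adj[OF path_walk[OF assms(1)], of 0] assms(2) by (simp add: hd_conv_nth)
qed

lemma path_vertex_not_regained_by_walk:
  assumes P: "path X d P" "2 \<le> length P" "x \<in> hd P" "x \<notin> P ! 1"
    and W: "walk X d W" "hd W = last P" "hd P \<notin> set W" "last W \<noteq> hd P"
  shows "x \<notin> last W"
proof
  assume x: "x \<in> last W"
  obtain g Q where PgQ: "P = g # Q" "Q \<noteq> []" using P(2) by (cases P) (auto simp: Suc_le_eq)
  then have "walk X d Q" "hd Q = P ! 1" "last Q = hd W"
    using walk_tl[OF path_walk[OF P(1)]] W(2) by (simp_all add: hd_conv_nth)
  then obtain Y where Y: "walk X d Y" "hd Y = P ! 1" "last Y = last W" "set Y \<subseteq> set Q \<union> set W"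
    using walk_join[OF _ W(1)] by metis
  have g: "g \<in> F" "x \<in> g" "card (g \<inter> P ! 1) = d"
    using walk_hd[OF path_walk[OF P(1)]] P(3) path_adjacent_first[OF P(1,2)] PgQ(1) by simp_all
  have "g \<notin> set Y" using Y(4) W(3) path_hd_notin_tl[OF P(1)] PgQ(1) by auto
  moreover have "g \<in> set Y"
    by (rule walk_into_star_passes[OF g(1,2,3) P(4) Y(1,2)]) (use Y(3) x W(4) PgQ(1) in simp_all)
  ultimately show False by blast
qed

lemma path_butlast_mem_inner:
  assumes "path X d fs" "e \<in> set (butlast fs)" "e \<noteq> hd fs"
  shows "e \<in> set (butlast (tl fs))"
proof (rule mem_innerI)
  show "e \<in> set fs" using assms(2) by (rule in_set_butlastD)
  show "e \<noteq> last fs" using assms(2) last_notin_butlast[OF path_distinct[OF assms(1)]] by blast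
qed (rule assms(3))

end

section \<open>Neighbourhoods of a ridge\<close>

locale stacked_complex_ridge = stacked_complex +
  fixes c :: "'a set"
  assumes cX: "c \<in> X" and cc: "card c = d"
begin

abbreviation "Xc n \<equiv> Xm X d c n"
abbreviation "Vc n \<equiv> Vm X d c n"

lemma Xc_iff: "f \<in> Xc n \<longleftrightarrow> f \<in> F \<and> (\<exists>fs. walk X d fs \<and> length fs \<le> n \<and> hd fs = f \<and> c \<subseteq> last fs)"
  unfolding Xm_def by simp

lemma Xc_0: "Xc 0 = {}" unfolding Xm_def using walk_ne by fastforce

lemma Xc_mono: "n \<le> n' \<Longrightarrow> Xc n \<subseteq> Xc n'"
  unfolding Xm_def by force

lemma Xc_subset_facets: "Xc n \<subseteq> F" unfolding Xm_def by blast

lemma walk_nth_in_Xc: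
  assumes "walk X d W" "c \<subseteq> last W" "k < length W"
  shows "W ! k \<in> Xc (length W - k)"
proof -
  have "walk X d (drop k W)" using walk_drop assms by blast
  moreover have "hd (drop k W) = W ! k" using assms(3) by (simp add: hd_drop_conv_nth)
  moreover have "last (drop k W) = last W" using assms(3) by simp
  moreover have "W ! k \<in> F" using walk_nth assms by blast
  ultimately show ?thesis unfolding Xc_iff using assms(2) by (intro conjI exI[of _ "drop k W"]) auto
qed

lemma Xc_Suc_walk:
  assumes "a \<in> Xc (Suc n)"
  shows "\<exists>Wa. walk X d Wa \<and> hd Wa = a \<and> c \<subseteq> last Wa \<and> set (tl Wa) \<subseteq> Xc n"
proof -
  obtain W where W: "walk X d W" "length W \<le> Suc n" "hd W = a" "c \<subseteq> last W" using assms unfolding Xc_iff by blast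
  have "set (tl W) \<subseteq> Xc n"
  proof
    fix f assume "f \<in> set (tl W)"
    then obtain k where k: "k < length (tl W)" "tl W ! k = f" by (metis in_set_conv_nth)
    then have "W ! Suc k = f" using walk_ne[OF W(1)] by (cases W) auto
    moreover have "Suc k < length W" using k by simp
    ultimately have "f \<in> Xc (length W - Suc k)" using walk_nth_in_Xc[OF W(1) W(4)] by blast
    moreover have "length W - Suc k \<le> n" using W(2) by simp
    ultimately show "f \<in> Xc n" using Xc_mono by blast
  qed
  then show ?thesis using W by blast
qed

lemma ridge_subset_facet: "\<exists>e\<in>F. c \<subseteq> e" using face_subset_facet[OF cX] .

lemma facets_subset_Xc: "\<exists>N. F \<subseteq> Xc N"
proof -
  obtain e where e: "e \<in> F" "c \<subseteq> e" using ridge_subset_facet by blast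
  have "\<forall>f\<in>F. \<exists>n. f \<in> Xc n"
  proof
    fix f assume f: "f \<in> F"
    obtain W where W: "walk X d W" "hd W = f" "last W = e" using facets_connected[OF f e(1)] by blast
    then have "f \<in> Xc (length W)" unfolding Xc_iff using f e(2) by blast
    then show "\<exists>n. f \<in> Xc n" by blast
  qed
  then obtain g where g: "\<forall>f\<in>F. f \<in> Xc (g f)" by metis
  have finite_facets: "finite F" using finite_faces by (simp add: facets_def)
  define N where "N = Max (g ` F)"
  have "\<forall>f\<in>F. f \<in> Xc N"
  proof
    fix f assume f: "f \<in> F"
    then have "g f \<le> N" unfolding N_def using finite_facets by simp
    then show "f \<in> Xc N" using g f Xc_mono by blast
  qed
  then show ?thesis by blast
qed

lemma Vc_eq: "1 \<le> n \<Longrightarrow> Vc n = \<Union>(Xc n)" unfolding Vm_def by simp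

lemma Vc_mono: assumes "1 \<le> n" "n \<le> n'" shows "Vc n \<subseteq> Vc n'"
proof -
  have "Vc n = \<Union>(Xc n)" using Vc_eq assms(1) by blast
  moreover have "Vc n' = \<Union>(Xc n')" using Vc_eq assms by simp
  moreover have "Xc n \<subseteq> Xc n'" using Xc_mono assms(2) by blast
  ultimately show ?thesis by blast
qed

lemma Xc_subset_Vc: "1 \<le> n \<Longrightarrow> f \<in> Xc n \<Longrightarrow> f \<subseteq> Vc n"
  using Vc_eq by blast

lemma vertices_subset_Vc: "\<exists>N\<ge>1. vertices X \<subseteq> Vc N"
proof -
  obtain N where N: "F \<subseteq> Xc N" using facets_subset_Xc by blast
  have "F \<subseteq> Xc (Suc N)" using N Xc_mono[of N "Suc N"] by auto
  moreover have "vertices X \<subseteq> \<Union>F" using vertex_in_facet by blast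
  ultimately have "vertices X \<subseteq> \<Union>(Xc (Suc N))" by blast
  then have "vertices X \<subseteq> Vc (Suc N)" using Vc_eq[of "Suc N"] by simp
  then show ?thesis by (intro exI[of _ "Suc N"]) simp
qed

lemma new_facet_attached:
  assumes n: "1 \<le> n" and h: "h \<in> Xc (Suc n)" "h \<notin> Xc n"
  shows "\<exists>T. walk X d T \<and> c \<subseteq> last T \<and> set T \<subseteq> Xc n \<and> card (h \<inter> hd T) = d"
proof -
  obtain Wa where Wa: "walk X d Wa" "hd Wa = h" "c \<subseteq> last Wa" "set (tl Wa) \<subseteq> Xc n"
    using Xc_Suc_walk[OF h(1)] by blast
  have hF: "h \<in> F" using h(1) Xc_subset_facets by blast
  have "tl Wa \<noteq> []"
  proof
    assume "tl Wa = []"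
    then have "Wa = [h]" using Wa(2) walk_ne[OF Wa(1)] by (metis list.collapse)
    then have "h \<in> Xc 1" unfolding Xc_iff using hF Wa(1) Wa(3) by (intro conjI exI[of _ "[h]"]) auto
    then show False using h(2) Xc_mono[OF n] by blast
  qed
  have Wa2: "Wa = h # hd (tl Wa) # tl (tl Wa)" using \<open>tl Wa \<noteq> []\<close> Wa(2) walk_ne[OF Wa(1)] by (metis list.collapse)
  have "card (h \<inter> hd (tl Wa)) = d" using Wa(1) Wa2 walk_Cons2 by metis
  moreover have "walk X d (tl Wa)" using walk_tl[OF Wa(1) \<open>tl Wa \<noteq> []\<close>] .
  moreover have "c \<subseteq> last (tl Wa)" using Wa(3) \<open>tl Wa \<noteq> []\<close> by (simp add: last_tl)
  ultimately show ?thesis using Wa(4) by blast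
qed

lemma attaching_ridge_unique:
  assumes n: "1 \<le> n" and h: "h \<in> Xc (Suc n)" "h \<notin> Xc n"
    and T: "walk X d T" "c \<subseteq> last T" "set T \<subseteq> Xc n" "card (h \<inter> hd T) = d"
    and W: "walk X d W" "h \<notin> set W" "hd W \<in> Xc (Suc n)" "card (last W \<inter> h) = d"
  shows "last W \<inter> h = h \<inter> hd T"
proof (rule ccontr)
  assume ne: "last W \<inter> h \<noteq> h \<inter> hd T"
  have hF: "h \<in> F" using h(1) Xc_subset_facets by blast
  obtain Wa where Wa: "walk X d Wa" "hd Wa = hd W" "c \<subseteq> last Wa" "set (tl Wa) \<subseteq> Xc n"
    using Xc_Suc_walk[OF W(3)] by blast
  have wr: "walk X d (rev W)" using W(1) walk_rev by simp
  have "last (rev W) = hd Wa" using Wa(2) walk_ne[OF W(1)] by (simp add: last_rev)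
  then obtain Y1 where Y1: "walk X d Y1" "hd Y1 = hd (rev W)" "last Y1 = last Wa" "set Y1 \<subseteq> set (rev W) \<union> set Wa"
    using walk_join[OF wr Wa(1)] by blast
  have wT: "walk X d (rev T)" using T(1) walk_rev by simp
  have "c \<subseteq> hd (rev T)" using T(2) walk_ne[OF T(1)] by (simp add: hd_rev)
  then obtain Y where Y: "walk X d Y" "hd Y = hd Y1" "last Y = last (rev T)" "set Y \<subseteq> set Y1 \<union> set (rev T)"
    using walk_join_ridge[OF Y1(1) wT, of c] Y1(3) Wa(3) cc by blast
  have hY: "h \<notin> set Y"
  proof
    assume hy: "h \<in> set Y"
    have "Wa = hd W # tl Wa" using Wa(2) walk_ne[OF Wa(1)] by (metis list.collapse)
    then have "set Wa = insert (hd W) (set (tl Wa))" by (metis list.set(2))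
    then have "set Wa \<subseteq> insert (hd W) (Xc n)" using Wa(4) by blast
    moreover have "hd W \<in> set W" using walk_ne[OF W(1)] by simp
    ultimately show False using hy Y(4) Y1(4) T(3) W(2) h(2) by auto
  qed
  have hdY: "hd Y = last W" using Y(2) Y1(2) walk_ne[OF W(1)] by (simp add: hd_rev)
  have lY: "last Y = hd T" using Y(3) walk_ne[OF T(1)] by (simp add: last_rev)
  have c1: "card (last W \<inter> h) = d" using W(4) .
  show False using ridges_of_facet_not_connected[OF hF _ _ c1 T(4) ne Y(1) hY] hdY lY by blast
qed

end

context stacked_complex begin

lemma path_vertex_only_in_last:
  assumes P: "path X d fs" "2 \<le> length fs" "z \<in> last fs" "z \<notin> fs ! (length fs - 2)"
    and f: "f \<in> set (butlast fs)"
  shows "z \<notin> f"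
proof -
  obtain i where i: "i < length fs - 1" "fs ! i = f"
    using f by (metis in_set_conv_nth length_butlast nth_butlast)
  have "path X d (rev fs)" "2 \<le> length (rev fs)" "z \<in> hd (rev fs)" "z \<notin> rev fs ! 1"
    using P rev_nth_1[OF P(2)] by (auto simp: path_rev hd_rev)
  then have "z \<notin> rev fs ! (length fs - 1 - i)"
    using path_vertex_not_regained i by auto
  then show ?thesis using i by (simp add: rev_nth)
qed

end

context stacked_complex_ridge begin

lemma walk_from_star_to_attachment:
  assumes n: "1 \<le> n" and zV: "z \<notin> Vc n"
    and T: "walk X d T" "c \<subseteq> last T" "set T \<subseteq> Xc n"
    and x: "x \<in> Vc (Suc n)" "\<not> in_common_facet X x z" and a: "a \<in> F" "x \<in> a"
  obtains Y where "walk X d Y" "hd Y = a" "last Y = hd T" "\<forall>f\<in>set Y. z \<notin> f"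
proof -
  have zXn: "z \<notin> f" if "f \<in> Xc n" for f using that Xc_subset_Vc[OF n] zV by blast
  have comm: "z \<notin> f" if "f \<in> F" "x \<in> f" for f using that x(2) unfolding in_common_facet_def by blast
  obtain g where g: "g \<in> Xc (Suc n)" "x \<in> g" using x(1) Vc_eq[of "Suc n"] by auto
  have gF: "g \<in> F" using g(1) Xc_subset_facets by blast
  obtain S where S: "walk X d S" "hd S = a" "last S = g" "\<forall>f\<in>set S. x \<in> f"
    using vertex_star_connected[OF a gF g(2)] by blast
  obtain Wg where Wg: "walk X d Wg" "hd Wg = g" "c \<subseteq> last Wg" "set (tl Wg) \<subseteq> Xc n"
    using Xc_Suc_walk[OF g(1)] by blast
  obtain Y1 where Y1: "walk X d Y1" "hd Y1 = a" "last Y1 = last Wg" "set Y1 \<subseteq> set S \<union> set Wg"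
    using walk_join[OF S(1) Wg(1)] S(2,3) Wg(2) by metis
  have "walk X d (rev T)" "c \<subseteq> hd (rev T)" "last (rev T) = hd T"
    using T walk_ne[OF T(1)] by (simp_all add: walk_rev hd_rev last_rev)
  then obtain Y where Y: "walk X d Y" "hd Y = a" "last Y = hd T" "set Y \<subseteq> set Y1 \<union> set T"
    using walk_join_ridge[OF Y1(1), of "rev T" c] Y1(2,3) Wg(3) cc by auto
  have "set Wg \<subseteq> insert g (Xc n)" using Wg(2,4) walk_ne[OF Wg(1)] by (metis list.collapse list.set(2) insert_mono)
  then have "z \<notin> f" if "f \<in> set Y" for f
    using that Y(4) Y1(4) S(4) walk_set[OF S(1)] T(3) comm[OF gF g(2)] comm zXn by blast
  then show thesis using that Y(1-3) by blast
qed

lemma path_to_new_vertex: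
  assumes n: "1 \<le> n" and h: "h \<in> Xc (Suc n)" "h \<notin> Xc n" "z \<in> h" and zV: "z \<notin> Vc n"
    and T: "walk X d T" "c \<subseteq> last T" "set T \<subseteq> Xc n" "card (h \<inter> hd T) = d"
    and x: "x \<in> Vc (Suc n)" "\<not> in_common_facet X x z"
    and fs: "path X d fs" "2 \<le> length fs" "x \<in> hd fs" "z \<in> last fs" "z \<notin> fs ! (length fs - 2)"
  shows "last fs = h \<and> fs ! (length fs - 2) \<inter> h = h \<inter> hd T"
proof -
  let ?g = "fs ! (length fs - 2)"
  have Wf: "walk X d fs" using fs(1) path_walk by blast
  have hF: "h \<in> F" using h(1) Xc_subset_facets by blast
  have gF: "?g \<in> F" using walk_nth[OF Wf] fs(2) by simp
  have adj: "card (?g \<inter> last fs) = d"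
    using walk_adj[OF Wf, of "length fs - 2"] fs(2) nth_Suc_length_minus_2[OF fs(2)] by simp
  have "butlast fs \<noteq> []" using fs(2) by (cases fs) auto
  then have B: "walk X d (rev (butlast fs))" "hd (rev (butlast fs)) = ?g" "last (rev (butlast fs)) = hd fs"
    using path_butlast_facts[OF fs(1,2)] by (simp_all add: walk_rev hd_rev last_rev)
  obtain Y where Y: "walk X d Y" "hd Y = hd fs" "last Y = hd T" "\<forall>f\<in>set Y. z \<notin> f"
    using walk_from_star_to_attachment[OF n zV T(1-3) x walk_hd[OF Wf] fs(3)] by blast
  obtain Y' where Y': "walk X d Y'" "hd Y' = ?g" "last Y' = hd T" "set Y' \<subseteq> set (rev (butlast fs)) \<union> set Y"
    using walk_join[OF B(1) Y(1)] B(2,3) Y(2,3) by metis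
  have zY': "z \<notin> f" if "f \<in> set Y'" for f
    using that Y'(4) Y(4) path_vertex_only_in_last[OF fs(1,2,4,5)] by auto
  have "last fs = h"
  proof (rule ccontr)
    assume "last fs \<noteq> h"
    \<comment> \<open>then the z-free walk Y' followed by h bypasses last fs\<close>
    have W: "walk X d (Y' @ [h])" using walk_append[OF Y'(1), of "[h]"] hF Y'(3) T(4) by (simp add: Int_commute)
    have hdW: "hd (Y' @ [h]) = ?g" using Y'(2) walk_ne[OF Y'(1)] by simp
    have "card (last fs \<inter> ?g) = d" using adj by (simp add: Int_commute)
    then have "last fs \<in> set (Y' @ [h])"
      by (rule walk_into_star_passes[OF walk_last[OF Wf] fs(4) _ fs(5) W hdW])
        (use h(3) \<open>last fs \<noteq> h\<close> in simp_all)
    then show False using zY' fs(4) \<open>last fs \<noteq> h\<close> by auto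
  qed
  moreover have "z \<notin> hd T" using T(3) walk_ne[OF T(1)] Xc_subset_Vc[OF n] zV by (meson hd_in_set subsetD)
  ultimately have "h \<inter> ?g = h - {z}" "h \<inter> hd T = h - {z}"
    using adjacent_Int_eq_remove[OF hF gF _ h(3) fs(5)] adj adjacent_Int_eq_remove[OF hF walk_hd[OF T(1)] T(4) h(3)]
    by (simp_all add: Int_commute)
  then show ?thesis using \<open>last fs = h\<close> by (simp add: Int_commute)
qed

end

section \<open>Bypassing a new facet or vertex\<close>

lemma partition_on_same_part:
  "partition_on A PP \<Longrightarrow> P \<in> PP \<Longrightarrow> Q \<in> PP \<Longrightarrow> a \<in> P \<Longrightarrow> a \<in> Q \<Longrightarrow> P = Q"
  unfolding partition_on_def disjoint_def pairwise_def disjnt_def by blast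

context stacked_complex begin

lemma simF'_facets: "simF' X d PV f g \<Longrightarrow> f \<in> F \<and> g \<in> F" unfolding simF'_def by blast
lemma simV'_vertices: "simV' X d PF f g \<Longrightarrow> f \<in> vertices X \<and> g \<in> vertices X" unfolding simV'_def by blast

lemma simF'_iff:
  "simF' X d PV f g \<longleftrightarrow> f \<in> F \<and> g \<in> F \<and> f \<noteq> g \<and>
     (\<exists>fs v w P. path X d fs \<and> hd fs = f \<and> last fs = g \<and>
        v \<in> f \<and> v \<notin> fs ! 1 \<and> w \<in> g \<and> w \<notin> fs ! (length fs - 2) \<and>
        P \<in> PV \<and> v \<in> P \<and> w \<in> P \<and> (\<forall>e\<in>set (butlast (tl fs)). e \<inter> P = {}))"
proof -
  have ends: "fs ! 0 - fs ! 1 = {v} \<longleftrightarrow> v \<in> f \<and> v \<notin> fs ! 1"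
    "last fs - fs ! (length fs - 2) = {w} \<longleftrightarrow> w \<in> g \<and> w \<notin> fs ! (length fs - 2)"
    if fs: "path X d fs" "hd fs = f" "last fs = g" "f \<noteq> g" for fs v w
  proof -
    have W: "walk X d fs" using fs(1) path_walk by blast
    have L: "2 \<le> length fs" using path_length_two_le[OF fs(1)] fs(2-4) by simp
    then have ne: "fs \<noteq> []" by auto
    then have f0: "fs ! 0 = f" "fs \<noteq> []" using fs(2) by (metis hd_conv_nth)+
    have "v \<in> f \<Longrightarrow> v \<notin> fs ! 1 \<Longrightarrow> fs ! 0 - fs ! 1 = {v}"
      using adjacent_Diff_eq[OF walk_nth[OF W] walk_nth[OF W] walk_adj[OF W], of 0] L f0 by simp
    then show "fs ! 0 - fs ! 1 = {v} \<longleftrightarrow> v \<in> f \<and> v \<notin> fs ! 1" using f0(1) by blast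
    have "card (last fs \<inter> fs ! (length fs - 2)) = d"
      using path_adjacent_last[OF fs(1) L] by (simp add: Int_commute)
    then have "w \<in> g \<Longrightarrow> w \<notin> fs ! (length fs - 2) \<Longrightarrow> last fs - fs ! (length fs - 2) = {w}"
      using adjacent_Diff_eq[OF walk_last[OF W] walk_nth[OF W]] fs(3) L by simp
    then show "last fs - fs ! (length fs - 2) = {w} \<longleftrightarrow> w \<in> g \<and> w \<notin> fs ! (length fs - 2)"
      using fs(3) by blast
  qed
  show ?thesis (is "?L \<longleftrightarrow> ?R")
  proof
    assume ?L
    then obtain fs v w P where fs: "f \<in> F" "g \<in> F" "f \<noteq> g" "path X d fs" "hd fs = f" "last fs = g"
        "fs ! 0 - fs ! 1 = {v}" "last fs - fs ! (length fs - 2) = {w}" "P \<in> PV" "v \<in> P" "w \<in> P"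
        "\<forall>i. 0 < i \<and> i < length fs - 1 \<longrightarrow> fs ! i \<inter> P = {}"
      unfolding simF'_def by blast
    have "v \<in> f \<and> v \<notin> fs ! 1" "w \<in> g \<and> w \<notin> fs ! (length fs - 2)"
      using ends(1)[where v = v, OF fs(4,5,6,3)] ends(2)[where w = w, OF fs(4,5,6,3)] fs(7,8) by blast+
    moreover have "\<forall>e\<in>set (butlast (tl fs)). e \<inter> P = {}"
      using fs(12) all_inner_nth_iff[of fs "\<lambda>e. e \<inter> P = {}"] by blast
    ultimately show ?R using fs
      by (intro conjI exI[of _ fs] exI[of _ v] exI[of _ w] exI[of _ P]) simp_all
  next
    assume ?R
    then obtain fs v w P where fs: "f \<in> F" "g \<in> F" "f \<noteq> g" "path X d fs" "hd fs = f" "last fs = g"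
        "v \<in> f" "v \<notin> fs ! 1" "w \<in> g" "w \<notin> fs ! (length fs - 2)" "P \<in> PV" "v \<in> P" "w \<in> P"
        "\<forall>e\<in>set (butlast (tl fs)). e \<inter> P = {}"
      by (elim conjE exE) blast
    have "fs ! 0 - fs ! 1 = {v}" "last fs - fs ! (length fs - 2) = {w}"
      using ends(1)[where v = v, OF fs(4,5,6,3)] ends(2)[where w = w, OF fs(4,5,6,3)] fs(7-10) by blast+
    moreover have "\<forall>i. 0 < i \<and> i < length fs - 1 \<longrightarrow> fs ! i \<inter> P = {}"
      using fs(14) all_inner_nth_iff[of fs "\<lambda>e. e \<inter> P = {}"] by blast
    ultimately show ?L unfolding simF'_def using fs
      by (intro conjI exI[of _ fs] exI[of _ v] exI[of _ w] bexI[of _ P]) simp_all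
  qed
qed


lemma simV'_iff:
  "simV' X d PF v w \<longleftrightarrow> v \<in> vertices X \<and> w \<in> vertices X \<and> v \<noteq> w \<and> \<not> in_common_facet X v w \<and>
     (\<exists>fs Q. path X d fs \<and> v \<in> hd fs \<and> v \<notin> fs ! 1 \<and> w \<in> last fs \<and> w \<notin> fs ! (length fs - 2) \<and>
        Q \<in> PF \<and> hd fs \<in> Q \<and> last fs \<in> Q \<and> (\<forall>e\<in>set (butlast (tl fs)). e \<notin> Q))"
proof (cases "in_common_facet X v w")
  case False
  have len: "2 \<le> length fs" if "path X d fs" "v \<in> hd fs" "w \<in> last fs" for fs
  proof (rule path_length_two_le[OF that(1)])
    show "hd fs \<noteq> last fs"
      using that False walk_hd[OF path_walk[OF that(1)]] unfolding in_common_facet_def by blast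
  qed
  have between: "path_between X d {v} fs {w} \<longleftrightarrow>
      path X d fs \<and> v \<in> hd fs \<and> v \<notin> fs ! 1 \<and> w \<in> last fs \<and> w \<notin> fs ! (length fs - 2)" for fs
  proof (cases "path X d fs \<and> v \<in> hd fs \<and> w \<in> last fs")
    case True
    then have "2 \<le> length fs" using len by blast
    then show ?thesis using True by (cases fs) (auto simp: path_between_def)
  qed (auto simp: path_between_def)
  have inner: "(\<forall>i. 0 < i \<and> i < length fs - 1 \<longrightarrow> fs ! i \<notin> Q) \<longleftrightarrow> (\<forall>e\<in>set (butlast (tl fs)). e \<notin> Q)"
    for fs and Q :: "'a set set" using all_inner_nth_iff[of fs "\<lambda>e. e \<notin> Q"] by simp
  show ?thesis unfolding simV'_def between inner by auto
qed (simp add: simV'_def)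

lemma simF'_sym: "simF' X d PV f g \<Longrightarrow> simF' X d PV g f"
proof -
  assume "simF' X d PV f g"
  then obtain fs v w P where fs: "f \<in> F" "g \<in> F" "f \<noteq> g" "path X d fs" "hd fs = f" "last fs = g"
      "v \<in> f" "v \<notin> fs ! 1" "w \<in> g" "w \<notin> fs ! (length fs - 2)" "P \<in> PV" "v \<in> P" "w \<in> P"
      "\<forall>e\<in>set (butlast (tl fs)). e \<inter> P = {}"
    unfolding simF'_iff by (elim conjE exE) blast
  have L: "2 \<le> length fs" using path_length_two_le[OF fs(4)] fs(3,5,6) by simp
  have "path X d (rev fs)" "hd (rev fs) = g" "last (rev fs) = f"
    "w \<notin> rev fs ! 1" "v \<notin> rev fs ! (length (rev fs) - 2)"
    using fs(4-6,8,10) rev_nth_1[OF L] rev_nth_length_minus_2[OF L] by (simp_all add: path_rev hd_rev last_rev)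
  then show "simF' X d PV g f" unfolding simF'_iff using fs inner_rev[of fs]
    by (intro conjI exI[of _ "rev fs"] exI[of _ w] exI[of _ v] exI[of _ P]) simp_all
qed

lemma simV'_sym: "simV' X d PF v w \<Longrightarrow> simV' X d PF w v"
proof -
  assume "simV' X d PF v w"
  then obtain fs Q where fs: "v \<in> vertices X" "w \<in> vertices X" "v \<noteq> w" "\<not> in_common_facet X v w"
      "path X d fs" "v \<in> hd fs" "v \<notin> fs ! 1" "w \<in> last fs" "w \<notin> fs ! (length fs - 2)"
      "Q \<in> PF" "hd fs \<in> Q" "last fs \<in> Q" "\<forall>e\<in>set (butlast (tl fs)). e \<notin> Q"
    unfolding simV'_iff by (elim conjE exE) blast
  have L: "2 \<le> length fs"
    using path_length_two_le[OF fs(5)] fs(4,6,8) walk_hd[OF path_walk[OF fs(5)]]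
    unfolding in_common_facet_def by blast
  have "path X d (rev fs)" "w \<in> hd (rev fs)" "w \<notin> rev fs ! 1" "v \<in> last (rev fs)"
    "v \<notin> rev fs ! (length (rev fs) - 2)" "hd (rev fs) \<in> Q" "last (rev fs) \<in> Q"
    using fs(5-12) rev_nth_1[OF L] rev_nth_length_minus_2[OF L] by (simp_all add: path_rev hd_rev last_rev)
  moreover have "\<not> in_common_facet X w v" using fs(4) unfolding in_common_facet_def by blast
  ultimately show "simV' X d PF w v" unfolding simV'_iff using fs inner_rev[of fs]
    by (intro conjI exI[of _ "rev fs"] exI[of _ Q]) simp_all
qed

lemma path_splice:
  assumes fs: "path X d fs" "2 \<le> length fs" and gs: "path X d gs" "2 \<le> length gs"
    and r: "fs ! (length fs - 2) \<inter> last fs = r" "gs ! 1 \<inter> hd gs = r" "last fs = hd gs"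
  obtains K where "path X d K" "hd K = hd fs" "last K = last gs"
    "set K \<subseteq> set (butlast fs) \<union> set (tl gs)"
proof -
  have Wf: "walk X d fs" and Wg: "walk X d gs" using fs(1) gs(1) path_walk by blast+
  have B: "walk X d (butlast fs)" "hd (butlast fs) = hd fs" "last (butlast fs) = fs ! (length fs - 2)"
    using path_butlast_facts[OF fs] by simp_all
  obtain g gs' where gs': "gs = g # gs'" "gs' \<noteq> []" using gs(2) by (cases gs) (auto simp: Suc_le_eq)
  then have G: "walk X d (tl gs)" "hd (tl gs) = gs ! 1" "last (tl gs) = last gs"
    using walk_tl[OF Wg] by (simp_all add: hd_conv_nth)
  have rd: "card r = d"
    using walk_adj[OF Wf, of "length fs - 2"] nth_Suc_length_minus_2[OF fs(2)] fs(2) r(1) by simp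
  have "r \<subseteq> last (butlast fs)" "r \<subseteq> hd (tl gs)" using B(3) G(2) r(1,2) by auto
  from walk_join_ridge[OF B(1) G(1) this rd]
  obtain C where C: "walk X d C" "hd C = hd (butlast fs)" "last C = last (tl gs)"
      "set C \<subseteq> set (butlast fs) \<union> set (tl gs)"
    by blast
  from walk_reduce_to_path[OF C(1)]
  obtain K where K: "path X d K" "hd K = hd C" "last K = last C" "set K \<subseteq> set C"
    by blast
  show thesis
  proof (rule that[OF K(1)])
    show "hd K = hd fs" "last K = last gs" using K(2,3) C(2,3) B(2) G(3) by simp_all
    show "set K \<subseteq> set (butlast fs) \<union> set (tl gs)" using K(4) C(4) by blast
  qed
qed

end

context stacked_complex_ridge begin

lemma path_into_new_facet:
  assumes n: "1 \<le> n" and h: "h \<in> Xc (Suc n)" "h \<notin> Xc n"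
    and T: "walk X d T" "c \<subseteq> last T" "set T \<subseteq> Xc n" "card (h \<inter> hd T) = d"
    and fs: "path X d fs" "2 \<le> length fs" "hd fs \<in> Xc (Suc n)" "last fs = h"
  shows "fs ! (length fs - 2) \<inter> h = h \<inter> hd T"
proof -
  have "walk X d (butlast fs)" "hd (butlast fs) \<in> Xc (Suc n)" "last (butlast fs) = fs ! (length fs - 2)"
    "h \<notin> set (butlast fs)" "card (fs ! (length fs - 2) \<inter> h) = d"
    using path_butlast_facts[OF fs(1,2)] path_adjacent_last[OF fs(1,2)] fs(3,4) by simp_all
  then show ?thesis using attaching_ridge_unique[OF n h T, of "butlast fs"] by simp
qed

lemma simF'_into_new_facet:
  assumes n: "1 \<le> n" and h: "h \<in> Xc (Suc n)" "h \<notin> Xc n"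
    and T: "walk X d T" "c \<subseteq> last T" "set T \<subseteq> Xc n" "card (h \<inter> hd T) = d"
    and x: "x \<in> Xc (Suc n)" and xh: "simF' X d PV x h"
  obtains fs v w P where "path X d fs" "2 \<le> length fs" "hd fs = x" "last fs = h"
    "fs ! (length fs - 2) \<inter> h = h \<inter> hd T" "v \<in> x" "v \<notin> fs ! 1" "h - hd T = {w}"
    "P \<in> PV" "v \<in> P" "w \<in> P" "\<forall>e\<in>set (butlast (tl fs)). e \<inter> P = {}"
proof -
  obtain fs v w P where fs: "x \<noteq> h" "path X d fs" "hd fs = x" "last fs = h" "v \<in> x" "v \<notin> fs ! 1"
      "w \<in> h" "w \<notin> fs ! (length fs - 2)" "P \<in> PV" "v \<in> P" "w \<in> P"
      "\<forall>e\<in>set (butlast (tl fs)). e \<inter> P = {}"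
    using xh unfolding simF'_iff by (elim conjE exE) blast
  have L: "2 \<le> length fs" using path_length_two_le[OF fs(2)] fs(1,3,4) by simp
  have r: "fs ! (length fs - 2) \<inter> h = h \<inter> hd T" using path_into_new_facet[OF n h T fs(2) L] x fs(3,4) by simp
  have "h - fs ! (length fs - 2) = {w}"
    using adjacent_Diff_eq[of h "fs ! (length fs - 2)" w] h(1) Xc_subset_facets walk_nth[OF path_walk[OF fs(2)]]
      path_adjacent_last[OF fs(2) L] fs(4,7,8) L by (auto simp: Int_commute)
  then have "h - hd T = {w}" using r by blast
  then show thesis using that fs L r by blast
qed

lemma simF'_bypass_new_facet:
  assumes n: "1 \<le> n" and h: "h \<in> Xc (Suc n)" "h \<notin> Xc n"
    and T: "walk X d T" "c \<subseteq> last T" "set T \<subseteq> Xc n" "card (h \<inter> hd T) = d"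
    and PV: "partition_on (vertices X) PV" "\<forall>P\<in>PV. independent X P"
    and x: "x \<in> Xc (Suc n)" and y: "y \<in> Xc (Suc n)"
    and xh: "simF' X d PV x h" and hy: "simF' X d PV h y"
  shows "x = y \<or> simF' X d PV x y"
proof (cases "x = y")
  case xy: False
  have xF: "x \<in> F" and yF: "y \<in> F" using x y Xc_subset_facets by blast+
  obtain fs v w P where fs: "path X d fs" "2 \<le> length fs" "hd fs = x" "last fs = h"
      "fs ! (length fs - 2) \<inter> h = h \<inter> hd T" "v \<in> x" "v \<notin> fs ! 1" "h - hd T = {w}"
      "P \<in> PV" "v \<in> P" "w \<in> P" "\<forall>e\<in>set (butlast (tl fs)). e \<inter> P = {}"
    using simF'_into_new_facet[OF n h T x xh] by blast
  obtain gs u w' P' where gs: "path X d gs" "2 \<le> length gs" "hd gs = y" "last gs = h"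
      "gs ! (length gs - 2) \<inter> h = h \<inter> hd T" "u \<in> y" "u \<notin> gs ! 1" "h - hd T = {w'}"
      "P' \<in> PV" "u \<in> P'" "w' \<in> P'" "\<forall>e\<in>set (butlast (tl gs)). e \<inter> P' = {}"
    using simF'_into_new_facet[OF n h T y simF'_sym[OF hy]] by blast
  \<comment> \<open>both paths enter h through the ridge attaching it to X_n, so they end in the same part\<close>
  have PP: "P' = P" using partition_on_same_part[OF PV(1) gs(9) fs(9)] gs(11) fs(11,8) gs(8) by simp
  have "path X d (rev gs)" "2 \<le> length (rev gs)" "fs ! (length fs - 2) \<inter> last fs = h \<inter> hd T"
    "rev gs ! 1 \<inter> hd (rev gs) = h \<inter> hd T" "last fs = hd (rev gs)"
    using gs(1,2,4,5) fs(4,5) rev_nth_1[OF gs(2)] by (simp_all add: path_rev hd_rev)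
  then obtain K where K: "path X d K" "hd K = x" "last K = y"
      "set K \<subseteq> set (butlast fs) \<union> set (tl (rev gs))"
    using path_splice[OF fs(1,2)] fs(3) gs(3) by (metis last_rev)
  have "set (tl (rev gs)) = set (butlast gs)" by (metis butlast_rev rev_rev_ident set_rev)
  then have K4: "set K \<subseteq> set (butlast fs) \<union> set (butlast gs)" using K(4) by simp
  have KL: "2 \<le> length K" using path_length_two_le[OF K(1)] K(2,3) xy by simp
  have inner: "e \<inter> P = {}" if "e \<in> set K" "e \<noteq> x" "e \<noteq> y" for e
  proof -
    have "e \<in> set (butlast fs) \<or> e \<in> set (butlast gs)" using that(1) K4 by blast
    then show ?thesis
    proof
      assume "e \<in> set (butlast fs)"
      then have "e \<in> set (butlast (tl fs))"
        by (rule path_butlast_mem_inner[OF fs(1)]) (use fs(3) that(2) in simp)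
      then show ?thesis using fs(12) by blast
    next
      assume "e \<in> set (butlast gs)"
      then have "e \<in> set (butlast (tl gs))"
        by (rule path_butlast_mem_inner[OF gs(1)]) (use gs(3) that(3) in simp)
      then show ?thesis using gs(12) PP by blast
    qed
  qed
  \<comment> \<open>v is missing from y, for otherwise fs followed by gs backwards would regain v\<close>
  have vy: "v \<notin> y"
  proof -
    have "x \<noteq> h" using path_hd_ne_last[OF fs(1,2)] fs(3,4) by simp
    have "x \<notin> set gs"
    proof
      assume "x \<in> set gs"
      then have "x \<in> set (butlast (tl gs))" using mem_innerI[of x gs] gs(3,4) xy \<open>x \<noteq> h\<close> by auto
      then show False using gs(12) PP fs(6,10) by blast
    qed
    then have W: "walk X d (rev gs)" "hd (rev gs) = last fs" "hd fs \<notin> set (rev gs)"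
      "last (rev gs) \<noteq> hd fs"
      using path_walk[OF gs(1)] gs(3,4) fs(3,4) xy by (simp_all add: walk_rev hd_rev last_rev)
    have "v \<in> hd fs" using fs(3,6) by simp
    then have "v \<notin> last (rev gs)" by (rule path_vertex_not_regained_by_walk[OF fs(1,2) _ fs(7) W])
    then show ?thesis using gs(3) by (simp add: last_rev)
  qed
  have "v \<notin> K ! 1"
  proof (cases "K ! 1 = y")
    case False
    moreover have "K ! 1 \<noteq> x" "K ! 1 \<in> set K"
      using distinct_nth_1_ne_hd[OF path_distinct[OF K(1)] KL] K(2) KL by simp_all
    ultimately show ?thesis using inner fs(10) by blast
  qed (use vy in simp)
  moreover have "u \<notin> K ! (length K - 2)"
  proof (cases "K ! (length K - 2) = x")
    case True
    have "u = v" if "u \<in> x"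
      using PV(2) fs(9,10) gs(10) PP xF fs(6) that unfolding independent_def in_common_facet_def by blast
    then show ?thesis using True vy gs(6) by blast
  next
    case False
    moreover have "K ! (length K - 2) \<noteq> y" "K ! (length K - 2) \<in> set K"
      using distinct_nth_length_minus_2_ne_last[OF path_distinct[OF K(1)] KL] K(3) KL by simp_all
    ultimately show ?thesis using inner gs(10) PP by blast
  qed
  moreover have "\<forall>e\<in>set (butlast (tl K)). e \<inter> P = {}"
    using mem_innerD[OF path_distinct[OF K(1)]] inner K(2,3) by blast
  ultimately have "simF' X d PV x y" unfolding simF'_iff using xF yF xy K(1-3) fs(6,9,10) gs(6,10) PP
    by (intro conjI exI[of _ K] exI[of _ v] exI[of _ u] exI[of _ P]) simp_all
  then show ?thesis by simp
qed simp

end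

context stacked_complex begin

definition gate_path :: "'a set \<Rightarrow> 'a set set \<Rightarrow> 'a \<Rightarrow> 'a set list \<Rightarrow> bool" where
  "gate_path h Q x fs \<longleftrightarrow> path X d fs \<and> 2 \<le> length fs \<and> x \<in> hd fs \<and> x \<notin> fs ! 1 \<and>
     last fs = h \<and> x \<notin> h \<and> hd fs \<in> Q \<and> (\<forall>e\<in>set (butlast (tl fs)). e \<notin> Q)"

lemma gate_paths_star_disjoint:
  assumes gx: "gate_path h Q x fs" and gy: "gate_path h Q y bs" and ne: "hd fs \<noteq> hd bs"
    and k: "k \<in> set bs" "x \<in> k"
  shows False
proof -
  obtain j where j: "j < length bs" "bs ! j = k" using k(1) by (metis in_set_conv_nth)
  have fs: "path X d fs" "2 \<le> length fs" "x \<in> hd fs" "x \<notin> fs ! 1" "last fs = h" "x \<notin> h"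
    and bs: "path X d bs" "last bs = h" "\<forall>e\<in>set (butlast (tl bs)). e \<notin> Q"
    using gx gy unfolding gate_path_def by blast+
  have "path X d (drop j bs)" "x \<in> hd (drop j bs)" "last (drop j bs) = last fs"
    using path_drop[OF bs(1) j(1)] j k(2) fs(5) bs(2) by (simp_all add: hd_drop_conv_nth)
  then obtain pre where "drop j bs = pre @ fs" using path_is_suffix[OF fs(1-4)] by blast
  then have "hd fs \<in> set bs" using fs(2) by (metis in_set_dropD hd_in_set list.size(3) not_numeral_le_zero Un_iff set_append)
  moreover have "hd fs \<noteq> last bs" using fs(3,6) bs(2) by blast
  ultimately have "hd fs \<notin> Q" using mem_innerI[of "hd fs" bs] ne bs(3) by blast
  then show False using gx unfolding gate_path_def by blast
qed

lemma gate_path_vertex_not_in_butlast: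
  assumes gx: "gate_path h Q x fs" and gy: "gate_path h Q y bs" and ne: "hd fs \<noteq> hd bs"
    and f: "f \<in> set (butlast fs) \<union> set (butlast bs)" "f \<noteq> hd fs" "x \<in> f"
  shows False
proof (cases "f \<in> set (butlast fs)")
  case True
  have fs: "path X d fs" "2 \<le> length fs" "x \<in> hd fs" "x \<notin> fs ! 1"
    using gx unfolding gate_path_def by blast+
  obtain i where i: "i < length fs - 1" "fs ! i = f" using True by (metis in_set_conv_nth length_butlast nth_butlast)
  have "i \<noteq> 0" using i f(2) fs(2) by (metis hd_conv_nth list.size(3) not_numeral_le_zero)
  then have "1 \<le> i" "i < length fs" using i(1) by auto
  then have "x \<notin> fs ! i" by (rule path_vertex_not_regained[OF fs])
  then show False using i(2) f(3) by simp
next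
  case False
  then have "f \<in> set bs" using f(1) by (auto dest: in_set_butlastD)
  then show False using gate_paths_star_disjoint[OF gx gy ne _ f(3)] by blast
qed

lemma gate_paths_not_in_common_facet:
  assumes gx: "gate_path h Q x fs" and gy: "gate_path h Q y bs" and "x \<noteq> y"
  shows "\<not> in_common_facet X x y"
proof
  assume "in_common_facet X x y"
  then obtain e where e: "e \<in> F" "x \<in> e" "y \<in> e" unfolding in_common_facet_def by blast
  have fs: "path X d fs" "2 \<le> length fs" "x \<in> hd fs" "x \<notin> fs ! 1" "last fs = h"
    and bs: "path X d bs" "2 \<le> length bs" "y \<in> hd bs" "y \<notin> bs ! 1" "last bs = h"
    using gx gy unfolding gate_path_def by blast+
  show False
  proof (cases "hd fs = hd bs")
    case True
    then have "fs = bs" using path_unique[OF fs(1) bs(1)] fs(5) bs(5) by simp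
    have W: "walk X d fs" using fs(1) path_walk by blast
    obtain u where "hd fs - fs ! 1 = {u}"
      using adjacent_Diff_singleton[OF walk_hd[OF W] walk_nth[OF W] path_adjacent_first[OF fs(1,2)]] fs(2) by auto
    moreover have "x \<in> hd fs - fs ! 1" "y \<in> hd fs - fs ! 1" using fs(3,4) bs(3,4) True \<open>fs = bs\<close> by auto
    ultimately show False using \<open>x \<noteq> y\<close> by auto
  next
    case False
    \<comment> \<open>the path from e through the star of x into fs also ends with bs\<close>
    obtain S where S: "walk X d S" "hd S = e" "last S = hd fs"
      using vertex_star_connected[OF e(1,2) walk_hd[OF path_walk[OF fs(1)]] fs(3)] by blast
    obtain C where C: "walk X d C" "hd C = e" "last C = last fs"
      using walk_join[OF S(1) path_walk[OF fs(1)]] S(2,3) by metis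
    obtain A where A: "path X d A" "hd A = e" "last A = last fs"
      using walk_reduce_to_path[OF C(1)] C(2,3) by metis
    obtain pre1 where "A = pre1 @ fs" using path_is_suffix[OF fs(1-4) A(1)] A(2,3) e(2) by auto
    moreover obtain pre2 where "A = pre2 @ bs"
      using path_is_suffix[OF bs(1-4) A(1)] A(2,3) e(3) fs(5) bs(5) by auto
    ultimately have "hd fs \<in> set bs \<or> hd bs \<in> set fs"
      using common_suffix_hd_mem[of pre1 fs pre2 bs] fs(2) bs(2) by fastforce
    then show False
      using gate_paths_star_disjoint[OF gx gy False _ fs(3)]
        gate_paths_star_disjoint[OF gy gx False[symmetric] _ bs(3)] by blast
  qed
qed

lemma gate_paths_splice:
  assumes gx: "gate_path h Q x fs" and gy: "gate_path h Q y bs" and ne: "hd fs \<noteq> hd bs"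
    and r: "fs ! (length fs - 2) \<inter> h = bs ! (length bs - 2) \<inter> h"
  obtains K where "path X d K" "hd K = hd fs" "last K = hd bs" "x \<notin> K ! 1"
    "y \<notin> K ! (length K - 2)" "\<forall>e\<in>set (butlast (tl K)). e \<notin> Q"
proof -
  have fs: "path X d fs" "2 \<le> length fs" "last fs = h" "\<forall>e\<in>set (butlast (tl fs)). e \<notin> Q"
    and bs: "path X d bs" "2 \<le> length bs" "last bs = h" "\<forall>e\<in>set (butlast (tl bs)). e \<notin> Q"
    using gx gy unfolding gate_path_def by blast+
  have "path X d (rev bs)" "2 \<le> length (rev bs)" "last fs = hd (rev bs)"
    "rev bs ! 1 \<inter> hd (rev bs) = fs ! (length fs - 2) \<inter> last fs"
    using bs fs(3) r rev_nth_1[OF bs(2)] by (simp_all add: path_rev hd_rev Int_commute)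
  then obtain K where K: "path X d K" "hd K = hd fs" "last K = last (rev bs)"
      "set K \<subseteq> set (butlast fs) \<union> set (tl (rev bs))"
    using path_splice[OF fs(1,2)] by metis
  have "set (tl (rev bs)) = set (butlast bs)" by (metis butlast_rev rev_rev_ident set_rev)
  then have K': "last K = hd bs" "set K \<subseteq> set (butlast fs) \<union> set (butlast bs)"
    using K(3,4) by (simp_all add: last_rev)
  have KL: "2 \<le> length K" using path_length_two_le[OF K(1)] K(2) K'(1) ne by simp
  have dK: "distinct K" using path_distinct[OF K(1)] .
  have "x \<notin> K ! 1"
  proof
    assume "x \<in> K ! 1"
    moreover have "K ! 1 \<in> set K" using KL by simp
    moreover have "K ! 1 \<noteq> hd fs" using distinct_nth_1_ne_hd[OF dK KL] K(2) by simp
    ultimately show False using gate_path_vertex_not_in_butlast[OF gx gy ne] K'(2) by blast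
  qed
  moreover have "y \<notin> K ! (length K - 2)"
  proof
    assume "y \<in> K ! (length K - 2)"
    moreover have "K ! (length K - 2) \<in> set K" using KL by simp
    moreover have "K ! (length K - 2) \<noteq> hd bs"
      using distinct_nth_length_minus_2_ne_last[OF dK KL] K'(1) by simp
    ultimately show False using gate_path_vertex_not_in_butlast[OF gy gx ne[symmetric]] K'(2) by blast
  qed
  moreover have "e \<notin> Q" if "e \<in> set (butlast (tl K))" for e
  proof -
    have e: "e \<in> set K" "e \<noteq> hd K" "e \<noteq> last K" using mem_innerD[OF dK that] by blast+
    then have "e \<in> set (butlast fs) \<or> e \<in> set (butlast bs)" using K'(2) by blast
    then show ?thesis
    proof
      assume "e \<in> set (butlast fs)"
      then have "e \<in> set (butlast (tl fs))"
        by (rule path_butlast_mem_inner[OF fs(1)]) (use e(2) K(2) in simp)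
      then show ?thesis using fs(4) by blast
    next
      assume "e \<in> set (butlast bs)"
      then have "e \<in> set (butlast (tl bs))"
        by (rule path_butlast_mem_inner[OF bs(1)]) (use e(3) K'(1) in simp)
      then show ?thesis using bs(4) by blast
    qed
  qed
  ultimately show thesis using that K(1,2) K'(1) by blast
qed

end

context stacked_complex_ridge begin

lemma gate_path_to_new_vertex:
  assumes n: "1 \<le> n" and zV: "z \<notin> Vc n" and h: "h \<in> Xc (Suc n)" "h \<notin> Xc n" "z \<in> h"
    and T: "walk X d T" "c \<subseteq> last T" "set T \<subseteq> Xc n" "card (h \<inter> hd T) = d"
    and x: "x \<in> Vc (Suc n)" and xz: "simV' X d PF x z"
  obtains fs Q where "gate_path h Q x fs" "Q \<in> PF" "h \<in> Q"
    "fs ! (length fs - 2) \<inter> h = h \<inter> hd T"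
proof -
  obtain fs Q where fs: "path X d fs" "x \<in> hd fs" "x \<notin> fs ! 1" "z \<in> last fs"
      "z \<notin> fs ! (length fs - 2)" "Q \<in> PF" "hd fs \<in> Q" "last fs \<in> Q"
      "\<forall>e\<in>set (butlast (tl fs)). e \<notin> Q"
    and nxz: "\<not> in_common_facet X x z"
    using xz unfolding simV'_iff by (elim conjE exE) blast
  have "hd fs \<noteq> last fs" using fs(2,4) nxz walk_hd[OF path_walk[OF fs(1)]]
    unfolding in_common_facet_def by blast
  then have L: "2 \<le> length fs" using path_length_two_le[OF fs(1)] by blast
  have into_h: "last fs = h" "fs ! (length fs - 2) \<inter> h = h \<inter> hd T"
    using path_to_new_vertex[OF n h zV T x nxz fs(1) L fs(2,4,5)] by blast+
  have "x \<notin> h" using nxz h(1,3) Xc_subset_facets unfolding in_common_facet_def by blast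
  then have "gate_path h Q x fs" unfolding gate_path_def using fs L into_h by simp
  then show thesis using that fs(6,8) into_h by simp
qed

lemma simV'_bypass_new_vertex:
  assumes n: "1 \<le> n" and zV: "z \<notin> Vc n" and h: "h \<in> Xc (Suc n)" "h \<notin> Xc n" "z \<in> h"
    and T: "walk X d T" "c \<subseteq> last T" "set T \<subseteq> Xc n" "card (h \<inter> hd T) = d"
    and PF: "partition_on F PF"
    and x: "x \<in> Vc (Suc n)" and y: "y \<in> Vc (Suc n)"
    and xz: "simV' X d PF x z" and zy: "simV' X d PF z y"
  shows "x = y \<or> simV' X d PF x y"
proof (cases "x = y")
  case xy: False
  obtain fs Q where gx: "gate_path h Q x fs" "Q \<in> PF" "h \<in> Q"
      "fs ! (length fs - 2) \<inter> h = h \<inter> hd T"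
    using gate_path_to_new_vertex[OF n zV h T x xz] by blast
  obtain bs Q' where gy: "gate_path h Q' y bs" "Q' \<in> PF" "h \<in> Q'"
      "bs ! (length bs - 2) \<inter> h = h \<inter> hd T"
    using gate_path_to_new_vertex[OF n zV h T y simV'_sym[OF zy]] by blast
  have "Q' = Q" using partition_on_same_part[OF PF gy(2) gx(2) gy(3) gx(3)] .
  then have gy': "gate_path h Q y bs" using gy(1) by simp
  have nc: "\<not> in_common_facet X x y" using gate_paths_not_in_common_facet[OF gx(1) gy' xy] .
  have "x \<in> hd fs" "y \<in> hd bs" "hd fs \<in> F" "hd fs \<in> Q" "hd bs \<in> Q"
    using gx(1) gy' walk_hd path_walk unfolding gate_path_def by blast+
  then have "hd fs \<noteq> hd bs" using nc unfolding in_common_facet_def by auto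
  then obtain K where "path X d K" "hd K = hd fs" "last K = hd bs" "x \<notin> K ! 1"
      "y \<notin> K ! (length K - 2)" "\<forall>e\<in>set (butlast (tl K)). e \<notin> Q"
    using gate_paths_splice[OF gx(1) gy'] gx(4) gy(4) by metis
  moreover have "x \<in> vertices X" "y \<in> vertices X"
    using simV'_vertices xz simV'_vertices[OF zy] by blast+
  ultimately have "simV' X d PF x y" unfolding simV'_iff
    using xy nc gx(2) \<open>x \<in> hd fs\<close> \<open>y \<in> hd bs\<close> \<open>hd fs \<in> Q\<close> \<open>hd bs \<in> Q\<close>
    by (intro conjI exI[of _ K] exI[of _ Q]) simp_all
  then show ?thesis by simp
qed simp

end


context stacked_complex_ridge begin

lemma finite_facets: "finite F" using finite_faces by (simp add: facets_def)
lemma finite_vertices: "finite (vertices X)" using finite_vertex_union by (simp add: vertices_def)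

lemma bypassable_new_facet:
  assumes "partition_on (vertices X) PV" "\<forall>P\<in>PV. independent X P"
    and "1 \<le> n" "h \<in> Xc (Suc n) - Xc n"
  shows "bypassable (simF' X d PV) (Xc (Suc n)) h"
proof -
  obtain T where T: "walk X d T" "c \<subseteq> last T" "set T \<subseteq> Xc n" "card (h \<inter> hd T) = d"
    using new_facet_attached assms(3,4) by blast
  show ?thesis
    unfolding bypassable_def using simF'_bypass_new_facet[OF assms(3) _ _ T assms(1,2)] assms(4) by blast
qed

lemma bypassable_new_vertex:
  assumes "partition_on F PF" "1 \<le> n" "z \<in> Vc (Suc n) - Vc n"
  shows "bypassable (simV' X d PF) (Vc (Suc n)) z"
proof -
  obtain h where h: "h \<in> Xc (Suc n)" "z \<in> h" using assms(3) Vc_eq[of "Suc n"] by auto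
  have "h \<notin> Xc n" using h(2) assms(3) Xc_subset_Vc[OF assms(2)] by blast
  then obtain T where T: "walk X d T" "c \<subseteq> last T" "set T \<subseteq> Xc n" "card (h \<inter> hd T) = d"
    using new_facet_attached[OF assms(2) h(1)] by blast
  show ?thesis
    unfolding bypassable_def
    using simV'_bypass_new_vertex[OF assms(2) _ h(1) \<open>h \<notin> Xc n\<close> h(2) T assms(1)] assms(3) by blast
qed

lemma chain_in_simF':
  assumes PV: "partition_on (vertices X) PV" "\<forall>P\<in>PV. independent X P"
    and fg: "f \<in> Xc m" "g \<in> Xc m" "gen_equiv (simF' X d PV) f g"
  shows "chain_in (simF' X d PV) (Xc m) f g"
proof -
  let ?R = "simF' X d PV"
  have m: "1 \<le> m" using fg(1) Xc_0 by (cases m) auto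
  obtain N where "F \<subseteq> Xc N" using facets_subset_Xc by blast
  then have "F \<subseteq> Xc (m + N)" using Xc_mono[of N "m + N"] by simp
  moreover have "(rel_on ?R F)\<^sup>*\<^sup>* f g"
    using rtranclp_rel_on_if_gen_equiv[of ?R F] simF'_sym simF'_facets fg(3) by blast
  ultimately have "(rel_on ?R (Xc (m + N)))\<^sup>*\<^sup>* f g" by (rule rtranclp_rel_on_mono)
  moreover have "finite (Xc (Suc n) - Xc n)" for n
    using finite_facets Xc_subset_facets by (meson finite_Diff finite_subset)
  moreover have "\<not> ?R h h" for h unfolding simF'_def by blast
  ultimately have "(rel_on ?R (Xc m))\<^sup>*\<^sup>* f g"
    using rtranclp_rel_on_descend[of m Xc ?R, OF _ _ bypassable_new_facet[OF PV] _ fg(1,2)] m Xc_mono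
    by simp
  then show ?thesis by (rule chain_in_if_rtranclp[OF fg(1)])
qed

lemma rtranclp_simV'_Vc:
  assumes PF: "partition_on F PF" and m: "1 \<le> m"
    and vw: "v \<in> Vc m" "w \<in> Vc m" "gen_equiv (simV' X d PF) v w"
  shows "(rel_on (simV' X d PF) (Vc m))\<^sup>*\<^sup>* v w"
proof -
  let ?R = "simV' X d PF"
  obtain N where "1 \<le> N" "vertices X \<subseteq> Vc N" using vertices_subset_Vc by blast
  then have "vertices X \<subseteq> Vc (m + N)" using Vc_mono[of N "m + N"] by simp
  moreover have "(rel_on ?R (vertices X))\<^sup>*\<^sup>* v w"
    using rtranclp_rel_on_if_gen_equiv[of ?R "vertices X"] simV'_sym simV'_vertices vw(3) by blast
  ultimately have "(rel_on ?R (Vc (m + N)))\<^sup>*\<^sup>* v w" by (rule rtranclp_rel_on_mono)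
  moreover have "finite (Vc (Suc n) - Vc n)" for n
  proof -
    have "Vc (Suc n) \<subseteq> vertices X" using Vc_eq Xc_subset_facets facet_sub_vertices by fastforce
    then show ?thesis using finite_vertices by (meson finite_Diff finite_subset)
  qed
  moreover have "\<not> ?R h h" for h unfolding simV'_def by blast
  moreover have "Vc n \<subseteq> Vc (Suc n)" if "m \<le> n" for n using Vc_mono m that by simp
  ultimately show ?thesis
    using rtranclp_rel_on_descend[of m Vc ?R, OF _ _ bypassable_new_vertex[OF PF] _ vw(1,2)] m
    by simp
qed

text \<open>For m = 0 the hypotheses are contradictory: distinct vertices of c are never linked by a
  \<sim>'-step out of V_1, as any vertex of V_1 shares a facet with c.\<close>

lemma chain_in_simV':
  assumes PF: "partition_on F PF"
    and vw: "v \<in> Vc m" "w \<in> Vc m" "v \<noteq> w" "gen_equiv (simV' X d PF) v w"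
  shows "chain_in (simV' X d PF) (Vc m) v w"
proof (cases "m = 0")
  case False
  then show ?thesis using chain_in_if_rtranclp[OF vw(1) rtranclp_simV'_Vc[OF PF _ vw(1,2,4)]] by simp
next
  case True
  let ?R = "simV' X d PF"
  obtain e where e: "e \<in> F" "c \<subseteq> e" using ridge_subset_facet by blast
  have "e \<in> Xc 1" unfolding Xc_iff using e by (intro conjI exI[of _ "[e]"]) auto
  then have cV: "c \<subseteq> Vc 1" using e(2) Xc_subset_Vc[of 1] by auto
  have v0: "v \<in> c" "w \<in> c" using vw True unfolding Vm_def by auto
  have "(rel_on ?R (Vc 1))\<^sup>*\<^sup>* v w" using rtranclp_simV'_Vc[OF PF _ _ _ vw(4)] v0 cV by blast
  then obtain u where "rel_on ?R (Vc 1) v u" using vw(3) by (metis converse_rtranclpE)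
  then have u: "u \<in> Vc 1" "?R v u" unfolding rel_on_def by auto
  obtain f where f: "f \<in> Xc 1" "u \<in> f" using u(1) Vc_eq[of 1] by auto
  obtain W where W: "walk X d W" "length W \<le> 1" "hd W = f" "c \<subseteq> last W"
    using f(1) unfolding Xc_iff by blast
  then have "W = [f]" using walk_ne[OF W(1)] by (cases W) auto
  then have "in_common_facet X v u"
    unfolding in_common_facet_def using f Xc_subset_facets v0(1) W(4) by auto
  then show ?thesis using u(2) unfolding simV'_def by blast
qed

end

theorem lemma3p5:
  fixes X :: "'a set set" and d m :: nat and c :: "'a set"
  assumes "stacked X d" and "codim_one_face X d c"
  shows "(\<forall>PF v w. partition_on (facets X) PF \<longrightarrow>
            v \<in> Vm X d c m \<longrightarrow> w \<in> Vm X d c m \<longrightarrow> v \<noteq> w \<longrightarrow>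
            gen_equiv (simV' X d PF) v w \<longrightarrow>
            chain_in (simV' X d PF) (Vm X d c m) v w)
       \<and> (\<forall>PV f g. partition_on (vertices X) PV \<longrightarrow> (\<forall>P\<in>PV. independent X P) \<longrightarrow>
            f \<in> Xm X d c m \<longrightarrow> g \<in> Xm X d c m \<longrightarrow> f \<noteq> g \<longrightarrow>
            gen_equiv (simF' X d PV) f g \<longrightarrow>
            chain_in (simF' X d PV) (Xm X d c m) f g)"
proof -
  interpret stacked_complex_ridge X d c
    using assms unfolding codim_one_face_def by (unfold_locales) auto
  show ?thesis using chain_in_simV' chain_in_simF' by blast
qed


end
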